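(* For every $\varphi\in C(\partial X)$ and every $z\in\overline X$ the integral $\mathcal I'_{(o)}[\varphi](z)=\int_{\partial X}\varphi(\xi)\langle\xi,z\rangle_o\,d\mu_o(\xi)$ converges absolutely, the function $\mathcal I'_{(o)}[\varphi]$ is continuous on $\overline X$, and there is a constant $C$ (independent of $\varphi$) with $\sup_{z\in\overline X}|\mathcal I'_{(o)}[\varphi](z)|\le C\|\varphi\|_\infty$. Thus $\mathcal I'_{(o)}:C(\partial X)\to C(\overline X)$ is a well-defined bounded operator.
   Context: Let $(X,d)$ be a proper geodesic CAT(-1) space, $\partial X$ its Gromov boundary, $\overline X=X\cup\partial X$ with its compact topology. For $x\in X$, $\langle y,z\rangle_x=\frac12(d(y,x)+d(z,x)-d(y,z))$ is the Gromov product, extended continuously to $\overline X$ with values in $[0,+\infty]$. $b_\xi(x,y)=\lim_{t\to\infty}(d(x,\xi_t)-d(y,\xi_t))$ is the Busemann cocycle. Let $G$ be a discrete, non-elementary, convex-cocompact group of isometries of $X$ (acting cocompactly on the union $\mathcal Q(\Lambda(G))$ of geodesics with both endpoints in its limit set $\Lambda(G)=\overline{G.o}\cap\partial X$), $\delta\in(0,\infty)$ its critical exponent and $(\mu_x)_{x\in X}$ its Patterson–Sullivan density: probability measures on $\partial X$ supported on $\Lambda(G)$ with $g_*\mu_x=\mu_{g.x}$ and $\frac{d\mu_x}{d\mu_y}(\xi)=e^{-\delta b_\xi(x,y)}$. Fix $o\in\mathcal Q(\Lambda(G))$. *)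

theory Defs
  imports "HOL-Analysis.Analysis" "HOL-Probability.Probability"
begin

definition geodesic_seg :: "(real \<Rightarrow> 'a::metric_space) \<Rightarrow> 'a \<Rightarrow> 'a \<Rightarrow> bool" where
  "geodesic_seg c x y \<longleftrightarrow> c 0 = x \<and> c (dist x y) = y \<and>
     (\<forall>s\<in>{0..dist x y}. \<forall>t\<in>{0..dist x y}. dist (c s) (c t) = \<bar>s - t\<bar>)"

definition proper_metric :: "'a::metric_space itself \<Rightarrow> bool" where
  "proper_metric _ \<longleftrightarrow> (\<forall>x::'a. \<forall>r. compact (cball x r))"

definition geodesic_metric :: "'a::metric_space itself \<Rightarrow> bool" where
  "geodesic_metric _ \<longleftrightarrow> (\<forall>x y::'a. \<exists>c. geodesic_seg c x y)"

text \<open>For a geodesic triangle with vertex x and sides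
  c1 (from x to y) and c2 (from x to z), with side lengths a = d(y,z), b = d(x,z), c = d(x,y),
  the comparison angle gamma at x in the hyperbolic plane satisfies
  cosh a = cosh b cosh c - sinh b sinh c cos gamma, and the comparison distance D between the points at
  distance s from x on [x,y] and t from x on [x,z] satisfies
  cosh D = cosh s cosh t - sinh s sinh t cos gamma.  The CAT(-1) condition d(c1 s, c2 t) <= D
  (for any two points on two sides of the triangle, which always share a vertex) is written below
  after multiplying by sinh b sinh c > 0.\<close>
definition CAT_minus1 :: "'a::metric_space itself \<Rightarrow> bool" where
  "CAT_minus1 _ \<longleftrightarrow>
    (\<forall>(x::'a) y z c1 c2. geodesic_seg c1 x y \<and> geodesic_seg c2 x z \<and> x \<noteq> y \<and> x \<noteq> z \<longrightarrow>
      (let a = dist y z; b = dist x z; c = dist x y in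
       \<forall>s\<in>{0..c}. \<forall>t\<in>{0..b}.
         cosh (dist (c1 s) (c2 t)) * sinh b * sinh c
           \<le> cosh s * cosh t * sinh b * sinh c
              - sinh s * sinh t * (cosh b * cosh c - cosh a)))"

definition isometry :: "('a::metric_space \<Rightarrow> 'a) \<Rightarrow> bool" where
  "isometry g \<longleftrightarrow> bij g \<and> (\<forall>x y. dist (g x) (g y) = dist x y)"

definition gprod :: "'a::metric_space \<Rightarrow> 'a \<Rightarrow> 'a \<Rightarrow> real" where
  "gprod o' y z = (dist y o' + dist z o' - dist y z) / 2"

text \<open>Points of the boundary are represented by geodesic rays issuing from the base point o
  (normalised to be constant = o on negative times); in a proper CAT(-1) space each point of the
  Gromov boundary is the endpoint of exactly one such ray.\<close>
definition rays :: "'a::metric_space \<Rightarrow> (real \<Rightarrow> 'a) set" where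
  "rays o' = {r. (\<forall>t\<le>0. r t = o') \<and> (\<forall>s\<ge>0. \<forall>t\<ge>0. dist (r s) (r t) = \<bar>s - t\<bar>)}"

definition Xbar :: "'a::metric_space \<Rightarrow> ('a + (real \<Rightarrow> 'a)) set" where
  "Xbar o' = range Inl \<union> Inr ` rays o'"

fun egprod :: "'a::metric_space \<Rightarrow> 'a + (real \<Rightarrow> 'a) \<Rightarrow> 'a + (real \<Rightarrow> 'a) \<Rightarrow> ereal" where
  "egprod o' (Inl y) (Inl z) = ereal (gprod o' y z)"
| "egprod o' (Inr \<xi>) (Inl z) = Lim at_top (\<lambda>t. ereal (gprod o' (\<xi> t) z))"
| "egprod o' (Inl y) (Inr \<eta>) = Lim at_top (\<lambda>t. ereal (gprod o' y (\<eta> t)))"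
| "egprod o' (Inr \<xi>) (Inr \<eta>) = Lim at_top (\<lambda>t. ereal (gprod o' (\<xi> t) (\<eta> t)))"

definition Xbar_top :: "'a::metric_space \<Rightarrow> ('a + (real \<Rightarrow> 'a)) topology" where
  "Xbar_top o' = topology_generated_by
     ({Inl ` ball x r | x r. True} \<union>
      {{z \<in> Xbar o'. egprod o' z (Inr \<xi>) > ereal R} | \<xi> R. \<xi> \<in> rays o'})"

definition bd_top :: "'a::metric_space \<Rightarrow> (real \<Rightarrow> 'a) topology" where
  "bd_top o' = topology_generated_by
     {{\<eta> \<in> rays o'. egprod o' (Inr \<eta>) (Inr \<xi>) > ereal R} | \<xi> R. \<xi> \<in> rays o'}"

definition borel_of :: "'b topology \<Rightarrow> 'b measure" where
  "borel_of T = sigma (topspace T) {U. openin T U}"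

definition busemann :: "(real \<Rightarrow> 'a::metric_space) \<Rightarrow> 'a \<Rightarrow> 'a \<Rightarrow> real" where
  "busemann \<xi> x y = Lim at_top (\<lambda>t. dist x (\<xi> t) - dist y (\<xi> t))"

definition bd_act :: "'a::metric_space \<Rightarrow> ('a \<Rightarrow> 'a) \<Rightarrow> (real \<Rightarrow> 'a) \<Rightarrow> (real \<Rightarrow> 'a)" where
  "bd_act o' g \<xi> = (THE \<eta>. \<eta> \<in> rays o' \<and> (\<exists>B. \<forall>t\<ge>0. dist (\<eta> t) (g (\<xi> t)) \<le> B))"

definition isometry_group :: "('a::metric_space \<Rightarrow> 'a) set \<Rightarrow> bool" where
  "isometry_group G \<longleftrightarrow> (\<forall>g\<in>G. isometry g) \<and> id \<in> G \<and>
     (\<forall>g\<in>G. \<forall>h\<in>G. g \<circ> h \<in> G) \<and> (\<forall>g\<in>G. inv g \<in> G)"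

definition discrete_group :: "('a::metric_space \<Rightarrow> 'a) set \<Rightarrow> bool" where
  "discrete_group G \<longleftrightarrow> (\<forall>x R. finite {g\<in>G. dist x (g x) \<le> R})"

definition limit_set :: "'a::metric_space \<Rightarrow> ('a \<Rightarrow> 'a) set \<Rightarrow> (real \<Rightarrow> 'a) set" where
  "limit_set o' G = {\<xi> \<in> rays o'. Inr \<xi> \<in> (Xbar_top o') closure_of (Inl ` (\<lambda>g. g o') ` G)}"

definition non_elementary :: "'a::metric_space \<Rightarrow> ('a \<Rightarrow> 'a) set \<Rightarrow> bool" where
  "non_elementary o' G \<longleftrightarrow> infinite (limit_set o' G)"

definition geodesic_line :: "(real \<Rightarrow> 'a::metric_space) \<Rightarrow> bool" where
  "geodesic_line c \<longleftrightarrow> (\<forall>s t. dist (c s) (c t) = \<bar>s - t\<bar>)"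

definition hull_Q :: "'a::metric_space \<Rightarrow> ('a \<Rightarrow> 'a) set \<Rightarrow> 'a set" where
  "hull_Q o' G = {c t | c t \<xi> \<eta>. geodesic_line c \<and> \<xi> \<in> limit_set o' G \<and> \<eta> \<in> limit_set o' G \<and>
      limitin (Xbar_top o') (\<lambda>s. Inl (c s)) (Inr \<xi>) at_top \<and>
      limitin (Xbar_top o') (\<lambda>s. Inl (c s)) (Inr \<eta>) at_bot}"

definition convex_cocompact :: "'a::metric_space \<Rightarrow> ('a \<Rightarrow> 'a) set \<Rightarrow> bool" where
  "convex_cocompact o' G \<longleftrightarrow>
     (\<exists>K. compact K \<and> hull_Q o' G \<subseteq> (\<Union>g\<in>G. g ` K))"

definition crit_exp :: "'a::metric_space \<Rightarrow> ('a \<Rightarrow> 'a) set \<Rightarrow> real" where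
  "crit_exp o' G = Inf {s. (\<lambda>g. exp (- s * dist o' (g o'))) summable_on G}"

definition PS_density :: "'a::metric_space \<Rightarrow> ('a \<Rightarrow> 'a) set \<Rightarrow> ('a \<Rightarrow> (real \<Rightarrow> 'a) measure) \<Rightarrow> bool" where
  "PS_density o' G \<mu> \<longleftrightarrow>
     (\<forall>x. prob_space (\<mu> x) \<and> space (\<mu> x) = rays o' \<and> sets (\<mu> x) = sets (borel_of (bd_top o'))
          \<and> limit_set o' G \<in> sets (\<mu> x) \<and> emeasure (\<mu> x) (limit_set o' G) = 1) \<and>
     (\<forall>g\<in>G. \<forall>x. distr (\<mu> x) (\<mu> (g x)) (bd_act o' g) = \<mu> (g x)) \<and>
     (\<forall>x y. \<mu> x = density (\<mu> y) (\<lambda>\<xi>. ennreal (exp (- crit_exp o' G * busemann \<xi> x y))))"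

definition Iprime :: "'a::metric_space \<Rightarrow> ('a \<Rightarrow> (real \<Rightarrow> 'a) measure) \<Rightarrow> ((real \<Rightarrow> 'a) \<Rightarrow> real)
    \<Rightarrow> 'a + (real \<Rightarrow> 'a) \<Rightarrow> real" where
  "Iprime o' \<mu> \<phi> z = (\<integral>\<xi>. \<phi> \<xi> * real_of_ereal (egprod o' (Inr \<xi>) z) \<partial>\<mu> o')"

end

theory Submission
  imports Defs "HOL-Library.Diagonal_Subsequence" "HOL-Real_Asymp.Real_Asymp"
begin

text \<open>Everything rests on a uniform exponential tail bound for the integrand. By thinness of
  CAT(-1) triangles, if \<open>\<langle>\<xi>, z\<rangle>\<^sub>o \<ge> S\<close> then \<open>\<langle>\<xi>, x\<rangle>\<^sub>o \<ge> S - 2\<close> for the point \<open>x\<close> at distance \<open>S\<close>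
  from \<open>o\<close> on the geodesic towards \<open>z\<close>, so that \<open>b\<^sub>\<xi>(x, o) \<le> 4 - S\<close>. Since
  \<open>\<mu>\<^sub>x\<close> is a probability measure with density \<open>exp (- \<delta> b\<^sub>\<xi>(x, o))\<close> with respect to \<open>\<mu>\<^sub>o\<close>,
  the set of such \<open>\<xi>\<close> has \<open>\<mu>\<^sub>o\<close>-measure at most \<open>exp (4 \<delta>) exp (- \<delta> S)\<close>, whatever \<open>z\<close> is.
  Summing these tails bounds \<open>\<integral> \<langle>\<xi>, z\<rangle>\<^sub>o d\<mu>\<^sub>o\<close> uniformly in \<open>z\<close>, which gives absolute
  convergence and the operator bound.

  Continuity at points of \<open>X\<close> is the 1-Lipschitz dependence of the Gromov product on \<open>z\<close>. At a
  boundary point \<open>\<eta>\<close>, comparison shows that \<open>\<langle>\<xi>, z\<rangle>\<^sub>o \<rightarrow> \<langle>\<xi>, \<eta>\<rangle>\<^sub>o\<close> as \<open>z \<rightarrow> \<eta>\<close>, uniformly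
  for \<open>\<langle>\<xi>, \<eta>\<rangle>\<^sub>o \<le> M\<close>, and the uniform tails control the remaining directions. Finally, a
  continuous \<open>\<phi>\<close> is bounded because the boundary is sequentially compact: in a proper space,
  rays from \<open>o\<close> have pointwise convergent subsequences (a diagonal argument over the rationals).\<close>

lemma rays_dist:
  assumes "r \<in> rays o'" "0 \<le> s" "0 \<le> t"
  shows "dist (r s) (r t) = \<bar>s - t\<bar>"
  using assms unfolding rays_def by auto

lemma rays_nonpos: "r \<in> rays o' \<Longrightarrow> t \<le> 0 \<Longrightarrow> r t = o'"
  unfolding rays_def by auto

lemma rays_dist_base:
  assumes "r \<in> rays o'" "0 \<le> t"
  shows "dist (r t) o' = t" "dist o' (r t) = t"
  using rays_dist[OF assms(1) order.refl assms(2)] rays_nonpos[OF assms(1), of 0] assms(2)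
  by (auto simp: dist_commute)

lemma rays_geodesic_seg:
  assumes "r \<in> rays o'" "0 \<le> t"
  shows "geodesic_seg r o' (r t)"
  using assms rays_dist[OF assms(1)] rays_nonpos[OF assms(1), of 0] rays_dist_base[OF assms]
  unfolding geodesic_seg_def by auto

lemma rays_in_cball:
  assumes "r \<in> rays o'"
  shows "r t \<in> cball o' \<bar>t\<bar>"
  using rays_dist_base[OF assms, of t] rays_nonpos[OF assms, of t] by (cases "0 \<le> t") auto

lemma geodesic_seg_ends: "geodesic_seg c x y \<Longrightarrow> c 0 = x" "geodesic_seg c x y \<Longrightarrow> c (dist x y) = y"
  unfolding geodesic_seg_def by auto

lemma geodesic_seg_dist:
  assumes "geodesic_seg c x p" "0 \<le> s" "s \<le> dist x p" "0 \<le> t" "t \<le> dist x p"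
  shows "dist (c s) (c t) = \<bar>s - t\<bar>"
  using assms unfolding geodesic_seg_def by auto

lemma geodesic_seg_dist_start:
  assumes "geodesic_seg c x p" "0 \<le> s" "s \<le> dist x p"
  shows "dist (c s) x = s"
  using geodesic_seg_dist[OF assms(1,2,3), of 0] geodesic_seg_ends(1)[OF assms(1)] assms(2) by simp

lemma geodesic_seg_reverse:
  assumes "geodesic_seg c x y"
  shows "geodesic_seg (\<lambda>s. c (dist x y - s)) y x"
  using assms unfolding geodesic_seg_def by (auto simp: dist_commute abs_minus_commute)

definition some_geodesic :: "'a::metric_space \<Rightarrow> 'a \<Rightarrow> real \<Rightarrow> 'a" where
  "some_geodesic x y = (SOME c. geodesic_seg c x y)"

lemma geodesic_seg_some_geodesic:
  "geodesic_metric TYPE('a) \<Longrightarrow> geodesic_seg (some_geodesic x y) x (y::'a::metric_space)"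
  unfolding some_geodesic_def geodesic_metric_def by (metis someI_ex)

lemma gprod_commute: "gprod o' y z = gprod o' z y"
  unfolding gprod_def by (simp add: dist_commute add.commute)

lemma gprod_nonneg: "0 \<le> gprod o' y z"
  unfolding gprod_def using dist_triangle[of y z o'] by (simp add: dist_commute)

lemma gprod_le_dist: "gprod o' y z \<le> dist z o'"
  unfolding gprod_def using dist_triangle[of y o' z] by (simp add: dist_commute)

lemma gprod_lipschitz: "\<bar>gprod o' y z - gprod o' y z'\<bar> \<le> dist z z'"
  using dist_triangle[of z o' z'] dist_triangle[of z' o' z] dist_triangle[of y z z']
    dist_triangle[of y z' z]
  unfolding gprod_def abs_le_iff by (auto simp: dist_commute field_simps)

lemma gprod_mono_geodesic_seg:
  assumes "geodesic_seg c o' p" "0 \<le> s" "s \<le> t" "t \<le> dist o' p"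
  shows "gprod o' (c s) y \<le> gprod o' (c t) y"
proof -
  have "dist (c s) o' = s" "dist (c t) o' = t"
    using geodesic_seg_dist_start[OF assms(1)] assms by auto
  moreover have "dist (c s) (c t) = t - s" using geodesic_seg_dist[OF assms(1), of s t] assms by auto
  ultimately show ?thesis unfolding gprod_def using dist_triangle[of "c t" y "c s"]
    by (simp add: dist_commute)
qed

lemma gprod_mono_rays:
  assumes "r \<in> rays o'" "0 \<le> s" "s \<le> t"
  shows "gprod o' (r s) y \<le> gprod o' (r t) y"
  using gprod_mono_geodesic_seg[OF rays_geodesic_seg[OF assms(1), of t]] assms
    rays_dist_base[OF assms(1), of t] by auto

lemma gprod_mono_rays_pair:
  assumes "\<xi> \<in> rays o'" "\<eta> \<in> rays o'" "0 \<le> s" "s \<le> t"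
  shows "gprod o' (\<xi> s) (\<eta> s) \<le> gprod o' (\<xi> t) (\<eta> t)"
  using gprod_mono_rays[OF assms(1), of s t "\<eta> s"] gprod_mono_rays[OF assms(2), of s t "\<xi> t"] assms
  by (simp add: gprod_commute)

lemma egprod_commute: "egprod o' a b = egprod o' b a"
  by (cases a; cases b) (simp_all add: gprod_commute)

lemma tendsto_SUP_nat_mono:
  fixes f :: "real \<Rightarrow> ereal"
  assumes mono: "\<And>s t. 0 \<le> s \<Longrightarrow> s \<le> t \<Longrightarrow> f s \<le> f t"
  shows "(f \<longlongrightarrow> (SUP n::nat. f (real n))) at_top"
proof (rule order_tendstoI)
  fix a assume "a < (SUP n::nat. f (real n))"
  then obtain n :: nat where "a < f (real n)" by (auto simp: less_SUP_iff)
  then show "\<forall>\<^sub>F x in at_top. a < f x"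
    using mono[of "real n"] by (auto simp: eventually_at_top_linorder intro!: exI[of _ "real n"]
      elim: less_le_trans)
next
  fix a assume a: "(SUP n::nat. f (real n)) < a"
  have "f t < a" if "t \<ge> 0" for t
  proof -
    have "f t \<le> f (real (nat \<lceil>t\<rceil>))" using mono[of t "real (nat \<lceil>t\<rceil>)"] that
      by (simp add: real_nat_ceiling_ge)
    also have "\<dots> \<le> (SUP n::nat. f (real n))" by (rule SUP_upper) auto
    finally show ?thesis using a by simp
  qed
  then show "\<forall>\<^sub>F x in at_top. f x < a" by (auto simp: eventually_at_top_linorder)
qed

lemma Lim_at_top_mono_eq_SUP_nat:
  fixes f :: "real \<Rightarrow> ereal"
  assumes "\<And>s t. 0 \<le> s \<Longrightarrow> s \<le> t \<Longrightarrow> f s \<le> f t"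
  shows "Lim at_top f = (SUP n::nat. f (real n))"
  using tendsto_SUP_nat_mono[of f, OF assms] by (simp add: tendsto_Lim)

lemma egprod_ray_point:
  assumes "\<xi> \<in> rays o'"
  shows "egprod o' (Inr \<xi>) (Inl w) = (SUP n::nat. ereal (gprod o' (\<xi> (real n)) w))"
  by (simp, rule Lim_at_top_mono_eq_SUP_nat) (use gprod_mono_rays[OF assms] in auto)

lemma egprod_rays:
  assumes "\<xi> \<in> rays o'" "\<eta> \<in> rays o'"
  shows "egprod o' (Inr \<xi>) (Inr \<eta>) = (SUP n::nat. ereal (gprod o' (\<xi> (real n)) (\<eta> (real n))))"
  by (simp, rule Lim_at_top_mono_eq_SUP_nat) (use gprod_mono_rays_pair[OF assms] in auto)

lemma SUP_nat_mono_ge: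
  fixes f :: "real \<Rightarrow> real"
  assumes "\<And>s t. 0 \<le> s \<Longrightarrow> s \<le> t \<Longrightarrow> f s \<le> f t" "0 \<le> t"
  shows "ereal (f t) \<le> (SUP n::nat. ereal (f (real n)))"
proof -
  have "f t \<le> f (real (nat \<lceil>t\<rceil>))" using assms by (simp add: real_nat_ceiling_ge)
  also have "ereal \<dots> \<le> (SUP n::nat. ereal (f (real n)))" by (rule SUP_upper) auto
  finally show ?thesis by simp
qed

lemma gprod_le_egprod_ray_point:
  assumes "\<xi> \<in> rays o'" "0 \<le> t"
  shows "ereal (gprod o' (\<xi> t) w) \<le> egprod o' (Inr \<xi>) (Inl w)"
  unfolding egprod_ray_point[OF assms(1)]
  by (rule SUP_nat_mono_ge[where f = "\<lambda>t. gprod o' (\<xi> t) w"]) (use gprod_mono_rays[OF assms(1)] assms in auto)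

lemma gprod_le_egprod_rays:
  assumes "\<xi> \<in> rays o'" "\<eta> \<in> rays o'" "0 \<le> t"
  shows "ereal (gprod o' (\<xi> t) (\<eta> t)) \<le> egprod o' (Inr \<xi>) (Inr \<eta>)"
  unfolding egprod_rays[OF assms(1,2)]
  by (rule SUP_nat_mono_ge[where f = "\<lambda>t. gprod o' (\<xi> t) (\<eta> t)"])
    (use gprod_mono_rays_pair[OF assms(1,2)] assms in auto)

lemma egprod_ray_point_le_dist:
  "\<xi> \<in> rays o' \<Longrightarrow> egprod o' (Inr \<xi>) (Inl w) \<le> ereal (dist w o')"
  unfolding egprod_ray_point by (auto intro!: SUP_least simp: gprod_le_dist)

lemma egprod_ray_point_finite:
  assumes "\<xi> \<in> rays o'"
  shows "egprod o' (Inr \<xi>) (Inl w) = ereal (real_of_ereal (egprod o' (Inr \<xi>) (Inl w)))"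
  using order_trans[OF _ gprod_le_egprod_ray_point[OF assms order.refl, of w]]
    egprod_ray_point_le_dist[OF assms, of w] gprod_nonneg[of o' "\<xi> 0" w]
  by (cases "egprod o' (Inr \<xi>) (Inl w)") auto

lemma egprod_ray_self:
  assumes "\<xi> \<in> rays o'"
  shows "egprod o' (Inr \<xi>) (Inr \<xi>) = \<infinity>"
proof -
  have "gprod o' (\<xi> (real n)) (\<xi> (real n)) = real n" for n :: nat
    unfolding gprod_def using rays_dist_base[OF assms, of "real n"] by simp
  moreover have "(SUP n::nat. ereal (real n)) = \<infinity>"
    unfolding top_ereal_def[symmetric] SUP_eq_top_iff
  proof (intro allI impI)
    fix x :: ereal assume "x < top"
    then obtain b where "x \<le> ereal b" by (cases x) auto
    moreover obtain n :: nat where "b < real n" using reals_Archimedean2 by blast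
    ultimately have "x < ereal (real n)" by (meson ereal_less_eq(3) le_less_trans less_ereal.simps(1))
    then show "\<exists>n\<in>UNIV. x < ereal (real n)" by blast
  qed
  ultimately show ?thesis unfolding egprod_rays[OF assms assms] by simp
qed

lemma Xbar_cases:
  assumes "z \<in> Xbar o'"
  obtains (point) w where "z = Inl w" | (ray) \<zeta> where "z = Inr \<zeta>" "\<zeta> \<in> rays o'"
  using assms unfolding Xbar_def by auto

lemma egprod_nonneg:
  assumes "\<xi> \<in> rays o'" "z \<in> Xbar o'"
  shows "0 \<le> egprod o' (Inr \<xi>) z"
  using assms(2)
proof (cases rule: Xbar_cases)
  case (point w)
  have "ereal 0 \<le> ereal (gprod o' (\<xi> 0) w)" by (simp add: gprod_nonneg)
  also have "\<dots> \<le> egprod o' (Inr \<xi>) (Inl w)" by (rule gprod_le_egprod_ray_point[OF assms(1) order.refl])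
  finally show ?thesis using point by (simp add: zero_ereal_def del: egprod.simps)
next
  case (ray \<zeta>)
  have "ereal 0 \<le> ereal (gprod o' (\<xi> 0) (\<zeta> 0))" by (simp add: gprod_nonneg)
  also have "\<dots> \<le> egprod o' (Inr \<xi>) (Inr \<zeta>)" by (rule gprod_le_egprod_rays[OF assms(1) ray(2) order.refl])
  finally show ?thesis using ray by (simp add: zero_ereal_def del: egprod.simps)
qed

text \<open>For \<open>z \<in> Xbar o'\<close>, \<open>egprod o' z z\<close> is the distance of \<open>z\<close> from the base point (\<open>\<infinity>\<close> at the boundary).\<close>

lemma egprod_le_self:
  assumes "\<xi> \<in> rays o'" "z \<in> Xbar o'"
  shows "egprod o' (Inr \<xi>) z \<le> egprod o' z z"
  using assms(2)
proof (cases rule: Xbar_cases)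
  case (point w)
  then show ?thesis using egprod_ray_point_le_dist[OF assms(1), of w] by (simp add: gprod_def)
next
  case (ray \<zeta>)
  then show ?thesis by (simp add: egprod_ray_self del: egprod.simps)
qed
section \<open>Comparison estimates in CAT(-1) spaces\<close>

lemma cosh_le_exp: "0 \<le> x \<Longrightarrow> cosh (x::real) \<le> exp x"
proof -
  assume "0 \<le> x"
  then have "exp (-x) \<le> exp x" by simp
  then show ?thesis unfolding cosh_field_def by simp
qed

lemma sinh_le_exp_half: "sinh (x::real) \<le> exp x / 2"
  unfolding sinh_field_def by simp

lemma exp_quarter_le_sinh: "1 \<le> x \<Longrightarrow> exp x / 4 \<le> sinh (x::real)"
proof -
  assume x: "1 \<le> x"
  have "2 \<le> exp (1::real)" using exp_ge_add_one_self[of 1] by simp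
  then have "2 \<le> exp x" using x by (smt (verit) exp_le_cancel_iff)
  then have "exp (-x) \<le> 1/2" by (simp add: exp_minus field_simps)
  then have "exp (-x) \<le> exp x / 2" using \<open>2 \<le> exp x\<close> by linarith
  then show ?thesis unfolding sinh_field_def by simp
qed

lemma exp_le_two_cosh: "exp (x::real) \<le> 2 * cosh x"
  unfolding cosh_field_def by simp

lemma two_cosh_minus_one_le_exp: "0 \<le> x \<Longrightarrow> 2 * cosh (x::real) - 1 \<le> exp x"
proof -
  assume "0 \<le> x"
  then have "exp (-x) \<le> 1" by simp
  then show ?thesis unfolding cosh_field_def by (simp add: field_simps)
qed

lemma sinh_eq_exp_mult: "sinh (x::real) = exp x * (1 - exp (-2*x)) / 2"
proof -
  have "exp x * exp (-2*x) = exp (-x)" by (simp add: mult_exp_exp)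
  then show ?thesis unfolding sinh_field_def by (simp add: right_diff_distrib)
qed

lemma cosh_minus_one_eq: "2 * (cosh (d::real) - 1) = exp d * (1 - exp (-d))^2"
  unfolding cosh_field_def exp_minus by (simp add: field_simps power2_eq_square)

lemma CAT_minus1_ineq:
  fixes c1 c2 :: "real \<Rightarrow> 'a::metric_space"
  assumes "CAT_minus1 TYPE('a)" "geodesic_seg c1 x y" "geodesic_seg c2 x z" "x \<noteq> y" "x \<noteq> z"
    "0 \<le> s" "s \<le> dist x y" "0 \<le> t" "t \<le> dist x z"
  shows "cosh (dist (c1 s) (c2 t)) * sinh (dist x z) * sinh (dist x y)
           \<le> cosh s * cosh t * sinh (dist x z) * sinh (dist x y)
              - sinh s * sinh t * (cosh (dist x z) * cosh (dist x y) - cosh (dist y z))"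
  using assms unfolding CAT_minus1_def Let_def by auto

lemma CAT_minus1_point_on_side:
  fixes o' p q :: "'a::metric_space"
  assumes cat: "CAT_minus1 TYPE('a)" and geo: "geodesic_metric TYPE('a)"
    and c: "geodesic_seg c o' p" and r: "0 \<le> r" "r \<le> dist o' p" and "p \<noteq> o'" "q \<noteq> p"
  shows "cosh (dist (c r) q) * sinh (dist o' p)
           \<le> cosh (dist p q) * sinh r + sinh (dist o' p - r) * cosh (dist o' q)"
proof -
  define A B C where "A = dist o' p" and "B = dist o' q" and "C = dist p q"
  have c1: "geodesic_seg (\<lambda>s. c (A - s)) p o'" using geodesic_seg_reverse[OF c] unfolding A_def .
  have c2: "geodesic_seg (some_geodesic p q) p q" by (rule geodesic_seg_some_geodesic[OF geo])
  have "cosh (dist (c r) q) * sinh C * sinh A \<le> cosh (A - r) * cosh C * sinh C * sinh A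
      - sinh (A - r) * sinh C * (cosh C * cosh A - cosh B)"
    using CAT_minus1_ineq[OF cat c1 c2 \<open>p \<noteq> o'\<close> \<open>q \<noteq> p\<close>[symmetric], of "A - r" C]
      geodesic_seg_ends(2)[OF c2] r
    unfolding A_def B_def C_def by (simp add: dist_commute)
  then have "sinh C * (cosh (dist (c r) q) * sinh A)
      \<le> sinh C * (cosh C * (sinh A * cosh (A - r) - cosh A * sinh (A - r)) + sinh (A - r) * cosh B)"
    by (simp add: algebra_simps)
  moreover have "0 < C" using \<open>q \<noteq> p\<close> unfolding C_def by (simp add: dist_commute)
  moreover have "sinh A * cosh (A - r) - cosh A * sinh (A - r) = sinh r"
    using sinh_diff[of A "A - r"] by simp
  ultimately show ?thesis unfolding A_def B_def C_def by (simp add: mult_le_cancel_left_pos)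
qed

lemma exp_dist_geodesic_point_le:
  fixes o' p q :: "'a::metric_space"
  assumes cat: "CAT_minus1 TYPE('a)" and geo: "geodesic_metric TYPE('a)"
    and c: "geodesic_seg c o' p" and r: "0 \<le> r" "r \<le> dist o' p" and A1: "1 \<le> dist o' p" and "q \<noteq> p"
  shows "exp (dist (c r) q + dist o' p) \<le> 4 * exp (dist p q + r) + 4 * exp (dist o' p - r + dist o' q)"
proof -
  define A B C d where "A = dist o' p" and "B = dist o' q" and "C = dist p q"
    and "d = dist (c r) q"
  have "p \<noteq> o'" using A1 by auto
  have E: "cosh d * sinh A \<le> cosh C * sinh r + sinh (A - r) * cosh B"
    using CAT_minus1_point_on_side[OF cat geo c r \<open>p \<noteq> o'\<close> \<open>q \<noteq> p\<close>] unfolding A_def B_def C_def d_def .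
  have "exp d * (exp A / 4) \<le> (2 * cosh d) * sinh A"
    using exp_le_two_cosh[of d] exp_quarter_le_sinh[of A] A1 by (intro mult_mono) (auto simp: A_def)
  also have "\<dots> \<le> 2 * (cosh C * sinh r + sinh (A - r) * cosh B)" using E by simp
  also have "\<dots> \<le> 2 * (exp C * (exp r / 2) + (exp (A - r) / 2) * exp B)"
    using cosh_le_exp[of C] sinh_le_exp_half[of r] sinh_le_exp_half[of "A - r"] cosh_le_exp[of B] r
    by (intro mult_left_mono add_mono mult_mono) (auto simp: A_def B_def C_def)
  finally show ?thesis unfolding A_def B_def C_def d_def by (simp add: mult_exp_exp field_simps)
qed

lemma gprod_geodesic_point_ge:
  fixes o' p q :: "'a::metric_space"
  assumes cat: "CAT_minus1 TYPE('a)" and geo: "geodesic_metric TYPE('a)"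
    and c: "geodesic_seg c o' p" and r: "0 \<le> r" "r \<le> dist o' p"
  shows "min (gprod o' q p) r - 2 \<le> gprod o' q (c r)"
proof -
  define A B C d where "A = dist o' p" and "B = dist o' q" and "C = dist p q"
    and "d = dist (c r) q"
  have cr: "dist (c r) o' = r" using geodesic_seg_dist_start[OF c r] .
  consider "A < 1" | "q = p" | "1 \<le> A" "q \<noteq> p" by linarith
  then show ?thesis
  proof cases
    case 1
    then show ?thesis using gprod_nonneg[of o' q "c r"] r A_def by (simp add: min_def)
  next
    case 2
    have "dist p (c r) = A - r"
      using geodesic_seg_dist[OF c, of "dist o' p" r] geodesic_seg_ends(2)[OF c] r A_def by auto
    then have "gprod o' q (c r) = r" unfolding 2 gprod_def using cr A_def
      by (simp add: dist_commute field_simps)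
    then show ?thesis by simp
  next
    case 3
    define m where "m = min (gprod o' q p) r"
    have "gprod o' q p = (B + A - C) / 2"
      unfolding gprod_def A_def B_def C_def by (simp add: dist_commute)
    then have "C + r \<le> A + B + r - 2 * m" "A - r + B \<le> A + B + r - 2 * m"
      unfolding m_def by (simp_all add: min_def field_simps)
    then have "exp (d + A) \<le> 8 * exp (A + B + r - 2 * m)"
      using exp_dist_geodesic_point_le[OF cat geo c r, of q] 3 unfolding A_def B_def C_def d_def
      by (smt (verit) exp_le_cancel_iff)
    also have "\<dots> \<le> exp 4 * exp (A + B + r - 2 * m)"
    proof (rule mult_right_mono)
      have "3 * 3 \<le> exp (2::real) * exp 2" using exp_ge_add_one_self[of 2] by (intro mult_mono) auto
      then show "8 \<le> exp (4::real)" by (simp add: mult_exp_exp)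
    qed simp
    finally have "d \<le> 4 + B + r - 2 * m" by (simp add: mult_exp_exp)
    moreover have "gprod o' q (c r) = (B + r - d) / 2"
      unfolding gprod_def B_def d_def using cr by (simp add: dist_commute)
    ultimately show ?thesis unfolding m_def by (simp add: field_simps)
  qed
qed

lemma CAT_minus1_same_time:
  fixes a b :: "real \<Rightarrow> 'a::metric_space"
  assumes cat: "CAT_minus1 TYPE('a)" and a: "geodesic_seg a o' pa" and b: "geodesic_seg b o' pb"
    and "pa \<noteq> o'" "pb \<noteq> o'" and T: "0 \<le> T" "T \<le> dist o' pa" "T \<le> dist o' pb"
  shows "(cosh (dist (a T) (b T)) - 1) * (sinh (dist o' pb) * sinh (dist o' pa))
     \<le> (sinh T)\<^sup>2 * (cosh (dist pa pb) - cosh (dist o' pb - dist o' pa))"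
proof -
  define A B d a' where "A = dist o' pa" and "B = dist o' pb" and "d = dist (a T) (b T)"
    and "a' = dist pa pb"
  have "cosh d * sinh B * sinh A
      \<le> cosh T * cosh T * sinh B * sinh A - sinh T * sinh T * (cosh B * cosh A - cosh a')"
    using CAT_minus1_ineq[OF cat a b, of T T] assms unfolding A_def B_def d_def a'_def by auto
  moreover have "cosh T * cosh T = 1 + sinh T * sinh T"
    using cosh_square_eq[of T] by (simp add: power2_eq_square)
  ultimately have "(cosh d - 1) * (sinh B * sinh A)
      \<le> sinh T * sinh T * (cosh a' - (cosh B * cosh A - sinh B * sinh A))"
    by (simp add: algebra_simps)
  then show ?thesis unfolding A_def B_def d_def a'_def cosh_diff[symmetric]
    by (simp add: power2_eq_square)
qed

lemma cosh_dist_same_time_le: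
  fixes a b :: "real \<Rightarrow> 'a::metric_space"
  assumes cat: "CAT_minus1 TYPE('a)" and a: "geodesic_seg a o' pa" and b: "geodesic_seg b o' pb"
    and A1: "1 \<le> dist o' pa" and B1: "1 \<le> dist o' pb"
    and T: "0 \<le> T" "T \<le> dist o' pa" "T \<le> dist o' pb"
  shows "cosh (dist (a T) (b T)) - 1 \<le> 16 * (sinh T)\<^sup>2 * exp (-2 * gprod o' pa pb)"
proof -
  define A B d a' where "A = dist o' pa" and "B = dist o' pb" and "d = dist (a T) (b T)"
    and "a' = dist pa pb"
  have ne: "pa \<noteq> o'" "pb \<noteq> o'" using A1 B1 by auto
  have "(cosh d - 1) * (exp B / 4 * (exp A / 4)) \<le> (cosh d - 1) * (sinh B * sinh A)"
    using exp_quarter_le_sinh[of A] exp_quarter_le_sinh[of B] A1 B1 cosh_real_ge_1[of d]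
    by (intro mult_left_mono mult_mono) (auto simp: A_def B_def)
  also have "\<dots> \<le> (sinh T)\<^sup>2 * (cosh a' - cosh (B - A))"
    using CAT_minus1_same_time[OF cat a b ne T] unfolding A_def B_def d_def a'_def by simp
  also have "\<dots> \<le> (sinh T)\<^sup>2 * exp a'"
  proof (rule mult_left_mono)
    show "cosh a' - cosh (B - A) \<le> exp a'"
      using cosh_le_exp[of a'] cosh_real_nonneg[of "B - A"] zero_le_dist[of pa pb] unfolding a'_def by linarith
  qed simp
  finally have "(cosh d - 1) * exp (A + B) \<le> 16 * ((sinh T)\<^sup>2 * exp a')"
    by (simp add: mult_exp_exp field_simps)
  then have "cosh d - 1 \<le> 16 * (sinh T)\<^sup>2 * exp (a' - (A + B))"
    by (simp add: exp_diff pos_le_divide_eq)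
  moreover have "a' - (A + B) = -2 * gprod o' pa pb"
    unfolding gprod_def A_def B_def a'_def by (simp add: dist_commute field_simps)
  ultimately show ?thesis unfolding d_def by simp
qed

lemma two_cosh_dist_same_time_le:
  fixes a b :: "real \<Rightarrow> 'a::metric_space"
  assumes cat: "CAT_minus1 TYPE('a)" and a: "geodesic_seg a o' pa" and b: "geodesic_seg b o' pb"
    and T: "0 < T" "T \<le> dist o' pa" "T \<le> dist o' pb"
  shows "2 * (cosh (dist (a T) (b T)) - 1) * sinh (dist o' pb) * sinh (dist o' pa)
    \<le> (exp T / 2)\<^sup>2 * exp (dist pa pb)"
proof -
  define A B d a' where "A = dist o' pa" and "B = dist o' pb" and "d = dist (a T) (b T)"
    and "a' = dist pa pb"
  have "pa \<noteq> o'" "pb \<noteq> o'" using T by auto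
  then have H: "(cosh d - 1) * (sinh B * sinh A) \<le> (sinh T)\<^sup>2 * (cosh a' - cosh (B - A))"
    using CAT_minus1_same_time[OF cat a b _ _ less_imp_le[OF T(1)] T(2,3)]
    unfolding A_def B_def d_def a'_def by simp
  have "2 * (cosh d - 1) * sinh B * sinh A = 2 * ((cosh d - 1) * (sinh B * sinh A))"
    by (simp only: mult.assoc)
  also have "\<dots> \<le> 2 * ((sinh T)\<^sup>2 * (cosh a' - cosh (B - A)))" using H by simp
  also have "\<dots> = (sinh T)\<^sup>2 * (2 * cosh a' - 2 * cosh (B - A))" by (simp add: algebra_simps)
  also have "\<dots> \<le> (sinh T)\<^sup>2 * (2 * cosh a' - 1)"
    using cosh_real_ge_1[of "B - A"] by (intro mult_left_mono) auto
  also have "\<dots> \<le> (exp T / 2)\<^sup>2 * exp a'"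
    using two_cosh_minus_one_le_exp[of a'] sinh_le_exp_half[of T] T(1) cosh_real_ge_1[of a']
    by (intro mult_mono power_mono) (auto simp: a'_def)
  finally show ?thesis unfolding A_def B_def d_def a'_def .
qed

lemma exp_neg_gprod_same_time_le:
  fixes a b :: "real \<Rightarrow> 'a::metric_space"
  assumes cat: "CAT_minus1 TYPE('a)" and a: "geodesic_seg a o' pa" and b: "geodesic_seg b o' pb"
    and T: "0 < T" "T \<le> dist o' pa" "T \<le> dist o' pb"
  shows "exp (-2 * gprod o' (a T) (b T)) * (1 - exp (- dist (a T) (b T)))\<^sup>2
           * (1 - exp (-2 * dist o' pa)) * (1 - exp (-2 * dist o' pb))
         \<le> exp (-2 * gprod o' pa pb)"
proof -
  define A B d a' where "A = dist o' pa" and "B = dist o' pb" and "d = dist (a T) (b T)"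
    and "a' = dist pa pb"
  define u v w where "u = (1 - exp (-d))\<^sup>2" and "v = 1 - exp (-2*B)" and "w = 1 - exp (-2*A)"
  have "(exp d * u) * (exp B * v / 2) * (exp A * w / 2) \<le> (exp T / 2)\<^sup>2 * exp a'"
    using two_cosh_dist_same_time_le[OF cat a b T] unfolding A_def B_def d_def a'_def u_def v_def w_def
      cosh_minus_one_eq sinh_eq_exp_mult[of "dist o' pa"] sinh_eq_exp_mult[of "dist o' pb"] .
  moreover have "exp (d + B + A) * (u * v * w) = 4 * ((exp d * u) * (exp B * v / 2) * (exp A * w / 2))"
    by (simp add: exp_add)
  moreover have "exp (2 * T + a') = 4 * ((exp T / 2)\<^sup>2 * exp a')"
  proof -
    have "exp (2 * T + a') = exp T * exp T * exp a'" by (simp add: mult_exp_exp)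
    then show ?thesis by (simp add: power2_eq_square)
  qed
  ultimately have M: "exp (d + B + A) * (u * v * w) \<le> exp (2 * T + a')" by linarith
  have "exp (d - 2 * T) = exp (d + B + A) * exp (- (2 * T + B + A))" by (simp add: mult_exp_exp)
  then have "exp (d - 2 * T) * u * w * v = exp (d + B + A) * (u * v * w) * exp (- (2 * T + B + A))"
    by (simp only: mult_ac)
  also have "\<dots> \<le> exp (2 * T + a') * exp (- (2 * T + B + A))"
    using M by (rule mult_right_mono) simp
  also have "\<dots> = exp (a' - A - B)" by (simp add: mult_exp_exp)
  finally have "exp (d - 2 * T) * u * w * v \<le> exp (a' - A - B)" .
  moreover have "-2 * gprod o' (a T) (b T) = d - 2 * T"
    unfolding gprod_def d_def using geodesic_seg_dist_start[OF a] geodesic_seg_dist_start[OF b] T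
    by simp
  moreover have "-2 * gprod o' pa pb = a' - A - B"
    unfolding gprod_def A_def B_def a'_def by (simp add: dist_commute)
  ultimately show ?thesis unfolding u_def v_def w_def d_def A_def B_def by simp
qed

lemma gprod_endpoints_le_same_time:
  fixes a b :: "real \<Rightarrow> 'a::metric_space"
  assumes cat: "CAT_minus1 TYPE('a)" and a: "geodesic_seg a o' pa" and b: "geodesic_seg b o' pb"
    and T: "0 < T" "T \<le> dist o' pa" "T \<le> dist o' pb"
    and sep: "exp (-\<epsilon>) \<le> (1 - exp (- dist (a T) (b T))) * (1 - exp (-2 * T))"
  shows "gprod o' pa pb \<le> gprod o' (a T) (b T) + \<epsilon>"
proof -
  define k1 k2 kA kB where "k1 = 1 - exp (- dist (a T) (b T))" and "k2 = 1 - exp (-2 * T)"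
    and "kA = 1 - exp (-2 * dist o' pa)" and "kB = 1 - exp (-2 * dist o' pb)"
  have k: "0 \<le> k1" "0 \<le> k2" "k2 \<le> kA" "k2 \<le> kB"
    unfolding k1_def k2_def kA_def kB_def using T by auto
  have "exp (-2 * \<epsilon>) = exp (-\<epsilon>) * exp (-\<epsilon>)" by (simp add: mult_exp_exp)
  also have "\<dots> \<le> (k1 * k2) * (k1 * k2)"
    using sep k unfolding k1_def[symmetric] k2_def[symmetric] by (intro mult_mono) auto
  also have "\<dots> = (k1 * k1) * (k2 * k2)" by (simp add: mult_ac)
  also have "\<dots> \<le> (k1 * k1) * (kA * kB)"
    using k by (intro mult_left_mono mult_mono) auto
  finally have "exp (-2 * gprod o' (a T) (b T)) * exp (-2 * \<epsilon>)
      \<le> exp (-2 * gprod o' (a T) (b T)) * (k1\<^sup>2 * kA * kB)"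
    by (intro mult_left_mono) (auto simp: power2_eq_square mult.assoc)
  also have "\<dots> \<le> exp (-2 * gprod o' pa pb)"
    using exp_neg_gprod_same_time_le[OF cat a b T] unfolding k1_def kA_def kB_def
    by (simp add: mult.assoc)
  finally show ?thesis by (simp add: mult_exp_exp)
qed

text \<open>\<open>geodesic_to o' z\<close> is a geodesic from \<open>o'\<close> towards \<open>z\<close> (a segment if \<open>z\<close> is a point, the ray
  itself if \<open>z\<close> is a boundary point); \<open>approx_point z s\<close> is its endpoint if \<open>z\<close> is a point and its
  point at time \<open>s\<close> otherwise, so that \<open>egprod o' (Inr \<xi>) z\<close> is the limit of
  \<open>gprod o' (\<xi> s) (approx_point z s)\<close>.\<close>

definition geodesic_to :: "'a::metric_space \<Rightarrow> 'a + (real \<Rightarrow> 'a) \<Rightarrow> real \<Rightarrow> 'a" where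
  "geodesic_to o' z = (case z of Inl w \<Rightarrow> some_geodesic o' w | Inr \<zeta> \<Rightarrow> \<zeta>)"

definition approx_point :: "'a + (real \<Rightarrow> 'a) \<Rightarrow> real \<Rightarrow> 'a" where
  "approx_point z s = (case z of Inl w \<Rightarrow> w | Inr \<zeta> \<Rightarrow> \<zeta> s)"

lemma egprod_eq_SUP_approx_point:
  assumes "\<xi> \<in> rays o'" "z \<in> Xbar o'"
  shows "egprod o' (Inr \<xi>) z = (SUP n::nat. ereal (gprod o' (\<xi> (real n)) (approx_point z (real n))))"
  using assms(2) by (cases rule: Xbar_cases) (simp_all add: approx_point_def egprod_ray_point[OF assms(1)]
      egprod_rays[OF assms(1)] del: egprod.simps)

lemma gprod_approx_point_mono:
  assumes "\<xi> \<in> rays o'" "z \<in> Xbar o'" "0 \<le> s" "s \<le> s'"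
  shows "gprod o' (\<xi> s) (approx_point z s) \<le> gprod o' (\<xi> s') (approx_point z s')"
  using assms(2) by (cases rule: Xbar_cases)
    (simp_all add: approx_point_def gprod_mono_rays[OF assms(1,3,4)] gprod_mono_rays_pair[OF assms(1) _ assms(3,4)])

lemma gprod_approx_point_le_egprod:
  assumes "\<xi> \<in> rays o'" "z \<in> Xbar o'" "0 \<le> s"
  shows "ereal (gprod o' (\<xi> s) (approx_point z s)) \<le> egprod o' (Inr \<xi>) z"
  unfolding egprod_eq_SUP_approx_point[OF assms(1,2)]
  by (rule SUP_nat_mono_ge[where f = "\<lambda>s. gprod o' (\<xi> s) (approx_point z s)"])
    (use gprod_approx_point_mono[OF assms(1,2)] assms(3) in auto)

lemma egprod_le_if_gprod_approx_point_le:
  assumes "\<xi> \<in> rays o'" "z \<in> Xbar o'" "\<And>s. s0 \<le> s \<Longrightarrow> gprod o' (\<xi> s) (approx_point z s) \<le> c"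
  shows "egprod o' (Inr \<xi>) z \<le> ereal c"
  unfolding egprod_eq_SUP_approx_point[OF assms(1,2)]
proof (rule SUP_least)
  fix n :: nat
  have "gprod o' (\<xi> (real n)) (approx_point z (real n))
      \<le> gprod o' (\<xi> (max (real n) s0)) (approx_point z (max (real n) s0))"
    by (rule gprod_approx_point_mono[OF assms(1,2)]) auto
  also have "\<dots> \<le> c" by (rule assms(3)) simp
  finally show "ereal (gprod o' (\<xi> (real n)) (approx_point z (real n))) \<le> ereal c" by simp
qed

lemma less_egprod_imp_gprod_approx_point:
  assumes "\<xi> \<in> rays o'" "z \<in> Xbar o'" "ereal c < egprod o' (Inr \<xi>) z"
  obtains s0 where "\<And>s. s0 \<le> s \<Longrightarrow> c < gprod o' (\<xi> s) (approx_point z s)"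
proof -
  obtain n :: nat where "c < gprod o' (\<xi> (real n)) (approx_point z (real n))"
    using assms(3) unfolding egprod_eq_SUP_approx_point[OF assms(1,2)] by (auto simp: less_SUP_iff)
  then show ?thesis
    using gprod_approx_point_mono[OF assms(1,2), of "real n"] by (intro that[of "real n"]) force+
qed

lemma geodesic_seg_geodesic_to:
  assumes "geodesic_metric TYPE('a)" "z \<in> Xbar (o'::'a::metric_space)" "0 \<le> s"
  shows "geodesic_seg (geodesic_to o' z) o' (approx_point z s)"
  using assms(2) by (cases rule: Xbar_cases) (simp_all add: geodesic_to_def approx_point_def
      geodesic_seg_some_geodesic[OF assms(1)] rays_geodesic_seg assms(3))

lemma le_dist_approx_point:
  assumes "z \<in> Xbar o'" "ereal t \<le> egprod o' z z" "t \<le> s" "0 \<le> s"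
  shows "t \<le> dist o' (approx_point z s)"
  using assms(1)
proof (cases rule: Xbar_cases)
  case (point w)
  then show ?thesis using assms(2) by (simp add: approx_point_def gprod_def dist_commute)
next
  case (ray \<zeta>)
  then show ?thesis using rays_dist_base(2)[OF ray(2) assms(4)] assms(3) by (simp add: approx_point_def)
qed

lemma dist_geodesic_to:
  assumes "geodesic_metric TYPE('a)" "z \<in> Xbar (o'::'a::metric_space)" "0 \<le> t"
    "ereal t \<le> egprod o' z z"
  shows "dist (geodesic_to o' z t) o' = t"
  using geodesic_seg_dist_start[OF geodesic_seg_geodesic_to[OF assms(1-3)] assms(3)]
    le_dist_approx_point[OF assms(2,4) order.refl assms(3)] by simp

lemma gprod_geodesic_to_le_egprod:
  assumes geo: "geodesic_metric TYPE('a)" and \<xi>: "\<xi> \<in> rays (o'::'a::metric_space)"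
    and z: "z \<in> Xbar o'" and t: "0 \<le> t" "ereal t \<le> egprod o' z z"
  shows "ereal (gprod o' (\<xi> t) (geodesic_to o' z t)) \<le> egprod o' (Inr \<xi>) z"
proof -
  let ?g = "geodesic_to o' z" and ?p = "approx_point z t"
  have g: "geodesic_seg ?g o' ?p" by (rule geodesic_seg_geodesic_to[OF geo z t(1)])
  have "gprod o' (?g t) (\<xi> t) \<le> gprod o' (?g (dist o' ?p)) (\<xi> t)"
    by (rule gprod_mono_geodesic_seg[OF g t(1)]) (use le_dist_approx_point[OF z t(2) order.refl t(1)] in auto)
  then have "ereal (gprod o' (\<xi> t) (?g t)) \<le> ereal (gprod o' (\<xi> t) ?p)"
    using geodesic_seg_ends(2)[OF g] by (simp add: gprod_commute)
  also have "\<dots> \<le> egprod o' (Inr \<xi>) z" by (rule gprod_approx_point_le_egprod[OF \<xi> z t(1)])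
  finally show ?thesis .
qed

lemma egprod_le_gprod_geodesic_to:
  assumes cat: "CAT_minus1 TYPE('a)" and geo: "geodesic_metric TYPE('a)"
    and \<xi>: "\<xi> \<in> rays (o'::'a::metric_space)" and z: "z \<in> Xbar o'"
    and t: "0 < t" "ereal t \<le> egprod o' z z"
    and sep: "exp (-\<epsilon>) \<le> (1 - exp (- dist (\<xi> t) (geodesic_to o' z t))) * (1 - exp (-2 * t))"
  shows "egprod o' (Inr \<xi>) z \<le> ereal (gprod o' (\<xi> t) (geodesic_to o' z t) + \<epsilon>)"
proof (rule egprod_le_if_gprod_approx_point_le[OF \<xi> z])
  fix s assume "t \<le> s"
  with t show "gprod o' (\<xi> s) (approx_point z s) \<le> gprod o' (\<xi> t) (geodesic_to o' z t) + \<epsilon>"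
    using gprod_endpoints_le_same_time[OF cat rays_geodesic_seg[OF \<xi>, of s]
        geodesic_seg_geodesic_to[OF geo z, of s] t(1) _ _ sep]
      rays_dist_base(2)[OF \<xi>, of s] le_dist_approx_point[OF z t(2), of s] by simp
qed

lemma cosh_dist_geodesic_to_le:
  assumes cat: "CAT_minus1 TYPE('a)" and geo: "geodesic_metric TYPE('a)"
    and \<eta>: "\<eta> \<in> rays (o'::'a::metric_space)" and z: "z \<in> Xbar o'"
    and t: "0 \<le> t" and R: "max t 1 \<le> R" "ereal R < egprod o' z (Inr \<eta>)"
  shows "cosh (dist (geodesic_to o' z t) (\<eta> t)) - 1 \<le> 16 * (sinh t)\<^sup>2 * exp (-2 * R)"
proof -
  obtain s0 where s0: "\<And>s. s0 \<le> s \<Longrightarrow> R < gprod o' (\<eta> s) (approx_point z s)"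
    using less_egprod_imp_gprod_approx_point[OF \<eta> z] R(2) by (metis egprod_commute)
  define s where "s = max s0 R"
  have Rs: "R < gprod o' (approx_point z s) (\<eta> s)" using s0[of s] by (simp add: s_def gprod_commute)
  have s: "0 \<le> s" "max t 1 \<le> s" "dist o' (\<eta> s) = s" using R rays_dist_base(2)[OF \<eta>, of s] by (auto simp: s_def)
  moreover have "R < dist o' (approx_point z s)"
    using Rs gprod_le_dist[of o' "\<eta> s" "approx_point z s"] by (simp add: gprod_commute dist_commute)
  ultimately have "cosh (dist (geodesic_to o' z t) (\<eta> t)) - 1
      \<le> 16 * (sinh t)\<^sup>2 * exp (-2 * gprod o' (approx_point z s) (\<eta> s))"
    using cosh_dist_same_time_le[OF cat geodesic_seg_geodesic_to[OF geo z s(1)]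
        rays_geodesic_seg[OF \<eta> s(1)] _ _ t] R(1) by simp
  also have "\<dots> \<le> 16 * (sinh t)\<^sup>2 * exp (-2 * R)" using Rs by (intro mult_left_mono) auto
  finally show ?thesis .
qed

lemma ereal_le_if_real_less:
  fixes x :: ereal
  assumes "\<And>b. b < a \<Longrightarrow> ereal b < x"
  shows "ereal a \<le> x"
proof (rule dense_le)
  fix y assume "y < ereal a"
  then show "y \<le> x" using assms by (cases y) (auto intro: less_imp_le)
qed

lemma egprod_geodesic_to_ge:
  assumes cat: "CAT_minus1 TYPE('a)" and geo: "geodesic_metric TYPE('a)"
    and \<xi>: "\<xi> \<in> rays (o'::'a::metric_space)" and z: "z \<in> Xbar o'"
    and S: "0 \<le> S" "ereal S \<le> egprod o' (Inr \<xi>) z"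
  shows "ereal (S - 2) \<le> egprod o' (Inr \<xi>) (Inl (geodesic_to o' z S))"
proof (rule ereal_le_if_real_less)
  fix b assume b: "b < S - 2"
  then have "ereal (b + 2) < ereal S" by simp
  then have "ereal (b + 2) < egprod o' (Inr \<xi>) z" using S(2) by (rule less_le_trans)
  then obtain s0 where s0: "\<And>s. s0 \<le> s \<Longrightarrow> b + 2 < gprod o' (\<xi> s) (approx_point z s)"
    using less_egprod_imp_gprod_approx_point[OF \<xi> z] by metis
  define s where "s = max s0 S"
  have "S \<le> dist o' (approx_point z s)"
    using le_dist_approx_point[OF z order_trans[OF S(2) egprod_le_self[OF \<xi> z]], of s] S(1)
    by (simp add: s_def)
  then have "min (gprod o' (\<xi> s) (approx_point z s)) S - 2 \<le> gprod o' (\<xi> s) (geodesic_to o' z S)"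
    using gprod_geodesic_point_ge[OF cat geo geodesic_seg_geodesic_to[OF geo z] S(1)] S(1)
    by (simp add: s_def)
  moreover have "b < min (gprod o' (\<xi> s) (approx_point z s)) S - 2" using s0[of s] b by (simp add: s_def)
  ultimately have "ereal b < ereal (gprod o' (\<xi> s) (geodesic_to o' z S))" by simp
  also have "\<dots> \<le> egprod o' (Inr \<xi>) (Inl (geodesic_to o' z S))"
    by (rule gprod_le_egprod_ray_point[OF \<xi>]) (simp add: s_def S(1) le_max_iff_disj)
  finally show "ereal b < egprod o' (Inr \<xi>) (Inl (geodesic_to o' z S))" .
qed

section \<open>Continuity of the Gromov product at boundary points\<close>

lemma dist_geodesic_to_less:
  assumes cat: "CAT_minus1 TYPE('a)" and geo: "geodesic_metric TYPE('a)"
    and \<eta>: "\<eta> \<in> rays (o'::'a::metric_space)" and t: "0 \<le> t" and r: "0 < r"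
  shows "\<exists>R\<ge>t. \<forall>z\<in>Xbar o'. ereal R < egprod o' z (Inr \<eta>) \<longrightarrow> dist (geodesic_to o' z t) (\<eta> t) < r"
proof -
  have "((\<lambda>R. 16 * (sinh t)\<^sup>2 * exp (-2 * R)) \<longlongrightarrow> 0) at_top" by real_asymp
  moreover have "0 < cosh r - 1" using r cosh_real_ge_1[of r] cosh_real_one_iff[of r] by linarith
  ultimately have "\<forall>\<^sub>F R in at_top. 16 * (sinh t)\<^sup>2 * exp (-2 * R) < cosh r - 1"
    by (rule order_tendstoD)
  then have "\<forall>\<^sub>F R in at_top. max t 1 \<le> R \<and> 16 * (sinh t)\<^sup>2 * exp (-2 * R) < cosh r - 1"
    by (intro eventually_conj eventually_ge_at_top)
  then obtain R where R: "max t 1 \<le> R" "16 * (sinh t)\<^sup>2 * exp (-2 * R) < cosh r - 1"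
    unfolding eventually_at_top_linorder by blast
  have "dist (geodesic_to o' z t) (\<eta> t) < r"
    if "z \<in> Xbar o'" "ereal R < egprod o' z (Inr \<eta>)" for z
    using cosh_dist_geodesic_to_le[OF cat geo \<eta> that(1) t R(1) that(2)] R(2) r
      cosh_real_nonneg_less_iff[of "dist (geodesic_to o' z t) (\<eta> t)" r] by simp
  then show ?thesis using R(1) by (intro exI[of _ R]) auto
qed

lemma eventually_separation_time:
  fixes \<epsilon> M :: real
  assumes "0 < \<epsilon>"
  shows "\<forall>\<^sub>F T in at_top. \<forall>X\<ge>2 * T - 2 * M - 1. exp (-\<epsilon>) \<le> (1 - exp (- X)) * (1 - exp (-2 * T))"
proof -
  have "((\<lambda>T. (1 - exp (- (2 * T - 2 * M - 1))) * (1 - exp (-2 * T))) \<longlongrightarrow> 1) at_top"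
    by real_asymp
  moreover have "exp (-\<epsilon>) < 1" using assms by simp
  ultimately have "\<forall>\<^sub>F T in at_top. exp (-\<epsilon>) < (1 - exp (- (2 * T - 2 * M - 1))) * (1 - exp (-2 * T))"
    by (rule order_tendstoD)
  then show ?thesis using eventually_ge_at_top[of "0::real"]
  proof eventually_elim
    case (elim T)
    have "(1 - exp (- (2 * T - 2 * M - 1))) * (1 - exp (-2 * T)) \<le> (1 - exp (- X)) * (1 - exp (-2 * T))"
      if "2 * T - 2 * M - 1 \<le> X" for X
      using that elim(2) by (intro mult_right_mono) auto
    then show ?case using elim(1) by force
  qed
qed

lemma real_of_ereal_between:
  assumes "ereal a \<le> x" "x \<le> ereal b"
  shows "a \<le> real_of_ereal x" "real_of_ereal x \<le> b"
  using assms by (cases x, simp_all)+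

lemma real_egprod_between_gprod_geodesic_to:
  assumes cat: "CAT_minus1 TYPE('a)" and geo: "geodesic_metric TYPE('a)"
    and \<xi>: "\<xi> \<in> rays (o'::'a::metric_space)" and y: "y \<in> Xbar o'"
    and t: "0 < t" "ereal t \<le> egprod o' y y"
    and sep: "exp (-\<epsilon>) \<le> (1 - exp (- dist (\<xi> t) (geodesic_to o' y t))) * (1 - exp (-2 * t))"
  shows "gprod o' (\<xi> t) (geodesic_to o' y t) \<le> real_of_ereal (egprod o' (Inr \<xi>) y)"
    and "real_of_ereal (egprod o' (Inr \<xi>) y) \<le> gprod o' (\<xi> t) (geodesic_to o' y t) + \<epsilon>"
  using real_of_ereal_between[OF gprod_geodesic_to_le_egprod[OF geo \<xi> y less_imp_le[OF t(1)] t(2)]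
      egprod_le_gprod_geodesic_to[OF cat geo \<xi> y t sep]] .

text \<open>Uniformly in the directions \<open>\<xi>\<close> with \<open>egprod o' (Inr \<xi>) (Inr \<eta>) \<le> M\<close>, the Gromov product
  \<open>egprod o' (Inr \<xi>) z\<close> is continuous in \<open>z\<close> at \<open>Inr \<eta>\<close>: choose a time \<open>T\<close> by which the geodesics
  towards \<open>\<xi>\<close> and \<open>\<eta>\<close> have separated, so that both products are read off at time \<open>T\<close>,
  and take \<open>z\<close> so close to \<open>\<eta>\<close> that its geodesic is still close to \<open>\<eta>\<close> at time \<open>T\<close>.\<close>

lemma egprod_uniform_continuity:
  assumes cat: "CAT_minus1 TYPE('a)" and geo: "geodesic_metric TYPE('a)"
    and \<eta>: "\<eta> \<in> rays (o'::'a::metric_space)" and \<epsilon>: "0 < \<epsilon>"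
  shows "\<exists>R. \<forall>z\<in>Xbar o'. ereal R < egprod o' z (Inr \<eta>) \<longrightarrow>
           (\<forall>\<xi>\<in>rays o'. egprod o' (Inr \<xi>) (Inr \<eta>) \<le> ereal M \<longrightarrow>
              \<bar>real_of_ereal (egprod o' (Inr \<xi>) z) - real_of_ereal (egprod o' (Inr \<xi>) (Inr \<eta>))\<bar> \<le> \<epsilon>)"
proof -
  have "\<forall>\<^sub>F T in at_top. 1 \<le> T \<and>
      (\<forall>X\<ge>2 * T - 2 * M - 1. exp (- (\<epsilon>/2)) \<le> (1 - exp (- X)) * (1 - exp (-2 * T)))"
    using \<epsilon> by (intro eventually_conj eventually_ge_at_top eventually_separation_time) simp
  then obtain T where T: "1 \<le> T" "0 < T" "0 \<le> T"
    and sep: "\<forall>X\<ge>2 * T - 2 * M - 1. exp (- (\<epsilon>/2)) \<le> (1 - exp (- X)) * (1 - exp (-2 * T))"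
    unfolding eventually_at_top_linorder by (meson order_refl less_le_trans zero_less_one less_imp_le)
  obtain R where "T \<le> R" and R: "\<And>z. z \<in> Xbar o' \<Longrightarrow> ereal R < egprod o' z (Inr \<eta>)
      \<Longrightarrow> dist (geodesic_to o' z T) (\<eta> T) < min 1 (\<epsilon>/4)"
    using dist_geodesic_to_less[OF cat geo \<eta> T(3), of "min 1 (\<epsilon>/4)"] \<epsilon> by auto
  note bounds = real_egprod_between_gprod_geodesic_to[OF cat geo _ _ T(2) _ sep[rule_format]]
  show ?thesis
  proof (intro exI[of _ R] ballI impI)
    fix z \<xi> assume z: "z \<in> Xbar o'" and zR: "ereal R < egprod o' z (Inr \<eta>)"
      and \<xi>: "\<xi> \<in> rays o'" and \<xi>M: "egprod o' (Inr \<xi>) (Inr \<eta>) \<le> ereal M"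
    have \<eta>X: "Inr \<eta> \<in> Xbar o'" using \<eta> by (simp add: Xbar_def)
    have "ereal T \<le> ereal R" using \<open>T \<le> R\<close> by simp
    also have "\<dots> < egprod o' (Inr \<eta>) z" using zR by (simp only: egprod_commute[of o' z])
    also have "\<dots> \<le> egprod o' z z" by (rule egprod_le_self[OF \<eta> z])
    finally have zz: "ereal T \<le> egprod o' z z" by simp
    have close: "dist (geodesic_to o' z T) (\<eta> T) < min 1 (\<epsilon>/4)" by (rule R[OF z zR])
    have "gprod o' (\<xi> T) (\<eta> T) \<le> M"
      using order_trans[OF gprod_le_egprod_rays[OF \<xi> \<eta>, of T] \<xi>M] T by simp
    then have far: "2 * T - 2 * M \<le> dist (\<xi> T) (\<eta> T)"
      unfolding gprod_def using rays_dist_base[OF \<xi>, of T] rays_dist_base[OF \<eta>, of T] T by simp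
    then have far\<eta>: "2 * T - 2 * M - 1 \<le> dist (\<xi> T) (geodesic_to o' (Inr \<eta>) T)"
      by (simp add: geodesic_to_def)
    have "2 * T - 2 * M - 1 \<le> dist (\<xi> T) (geodesic_to o' z T)"
      using far close dist_triangle[of "\<xi> T" "\<eta> T" "geodesic_to o' z T"] by (simp add: dist_commute)
    note bounds[OF \<xi> z zz this] bounds[OF \<xi> \<eta>X _ far\<eta>]
    moreover have "\<bar>gprod o' (\<xi> T) (geodesic_to o' z T) - gprod o' (\<xi> T) (\<eta> T)\<bar> \<le> \<epsilon>/4"
      using gprod_lipschitz[of o' "\<xi> T" "geodesic_to o' z T" "\<eta> T"] close by linarith
    ultimately show "\<bar>real_of_ereal (egprod o' (Inr \<xi>) z) - real_of_ereal (egprod o' (Inr \<xi>) (Inr \<eta>))\<bar> \<le> \<epsilon>"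
      using egprod_ray_self[OF \<eta>] unfolding abs_le_iff geodesic_to_def by simp
  qed
qed

definition bd_basis :: "'a::metric_space \<Rightarrow> (real \<Rightarrow> 'a) set set" where
  "bd_basis o' = {{\<eta> \<in> rays o'. egprod o' (Inr \<eta>) (Inr \<xi>) > ereal R} | \<xi> R. \<xi> \<in> rays o'}"

lemma bd_top_eq: "bd_top o' = topology_generated_by (bd_basis o')"
  unfolding bd_top_def bd_basis_def ..

lemma topspace_bd_top: "topspace (bd_top o') = rays o'"
proof -
  have "\<xi> \<in> \<Union>(bd_basis o')" if "\<xi> \<in> rays o'" for \<xi>
  proof -
    have "\<xi> \<in> {\<eta> \<in> rays o'. egprod o' (Inr \<eta>) (Inr \<xi>) > ereal 0}" using that egprod_ray_self[OF that] by simp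
    then show ?thesis unfolding bd_basis_def using that by blast
  qed
  then have "\<Union>(bd_basis o') = rays o'" unfolding bd_basis_def by blast
  then show ?thesis unfolding bd_top_eq by simp
qed

lemma openin_bd_top_I:
  assumes "U \<subseteq> rays o'"
    and "\<And>\<xi>. \<xi> \<in> U \<Longrightarrow> \<exists>R. {\<eta> \<in> rays o'. egprod o' (Inr \<eta>) (Inr \<xi>) > ereal R} \<subseteq> U"
  shows "openin (bd_top o') U"
proof -
  define K where "K = {B \<in> bd_basis o'. B \<subseteq> U}"
  have "U \<subseteq> \<Union>K"
  proof
    fix \<xi> assume \<xi>U: "\<xi> \<in> U"
    then have \<xi>: "\<xi> \<in> rays o'" using assms(1) by auto
    obtain R where R: "{\<eta> \<in> rays o'. egprod o' (Inr \<eta>) (Inr \<xi>) > ereal R} \<subseteq> U" using assms(2)[OF \<xi>U] by blast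
    then have "{\<eta> \<in> rays o'. egprod o' (Inr \<eta>) (Inr \<xi>) > ereal R} \<in> K"
      unfolding K_def bd_basis_def using \<xi> by blast
    moreover have "\<xi> \<in> {\<eta> \<in> rays o'. egprod o' (Inr \<eta>) (Inr \<xi>) > ereal R}" using \<xi> egprod_ray_self[OF \<xi>] by simp
    ultimately show "\<xi> \<in> \<Union>K" by blast
  qed
  then have "U = \<Union>K" unfolding K_def by auto
  moreover have "generate_topology_on (bd_basis o') (\<Union>K)"
    by (rule generate_topology_on.UN) (auto simp: K_def intro: generate_topology_on.Basis)
  ultimately show ?thesis unfolding bd_top_eq openin_topology_generated_by_iff by simp
qed

lemma continuous_map_bd_top_I:
  fixes f :: "(real \<Rightarrow> 'a::metric_space) \<Rightarrow> real"
  assumes "\<And>\<xi>0 r. \<xi>0 \<in> rays o' \<Longrightarrow> 0 < r \<Longrightarrow>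
    \<exists>R. \<forall>\<xi>\<in>rays o'. ereal R < egprod o' (Inr \<xi>) (Inr \<xi>0) \<longrightarrow> \<bar>f \<xi> - f \<xi>0\<bar> < r"
  shows "continuous_map (bd_top o') euclideanreal f"
  unfolding continuous_map_def topspace_bd_top
proof (intro conjI allI impI)
  fix U :: "real set" assume "openin euclideanreal U"
  then have U: "open U" by simp
  show "openin (bd_top o') {\<xi> \<in> rays o'. f \<xi> \<in> U}"
  proof (rule openin_bd_top_I)
    fix \<xi>0 assume "\<xi>0 \<in> {\<xi> \<in> rays o'. f \<xi> \<in> U}"
    then have \<xi>0: "\<xi>0 \<in> rays o'" "f \<xi>0 \<in> U" by auto
    obtain r where r: "0 < r" "ball (f \<xi>0) r \<subseteq> U" using U \<xi>0(2) open_contains_ball by blast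
    obtain R where "\<forall>\<xi>\<in>rays o'. ereal R < egprod o' (Inr \<xi>) (Inr \<xi>0) \<longrightarrow> \<bar>f \<xi> - f \<xi>0\<bar> < r"
      using assms[OF \<xi>0(1) r(1)] by blast
    then have "{\<eta> \<in> rays o'. ereal R < egprod o' (Inr \<eta>) (Inr \<xi>0)} \<subseteq> {\<xi> \<in> rays o'. f \<xi> \<in> U}"
      using r(2) by (auto simp: dist_real_def abs_minus_commute)
    then show "\<exists>R. {\<eta> \<in> rays o'. ereal R < egprod o' (Inr \<eta>) (Inr \<xi>0)} \<subseteq> {\<xi> \<in> rays o'. f \<xi> \<in> U}" ..
  qed auto
qed auto

lemma borel_measurable_continuous_bd_top:
  fixes f :: "(real \<Rightarrow> 'a::metric_space) \<Rightarrow> real"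
  assumes sp: "space N = rays o'" and st: "sets N = sets (borel_of (bd_top o'))"
    and f: "continuous_map (bd_top o') euclideanreal f"
  shows "f \<in> borel_measurable N"
proof (rule borel_measurableI)
  fix U :: "real set" assume "open U"
  then have "openin (bd_top o') {\<xi> \<in> rays o'. f \<xi> \<in> U}"
    using openin_continuous_map_preimage[OF f] by (simp add: topspace_bd_top)
  moreover have "{U. openin (bd_top o') U} \<subseteq> Pow (topspace (bd_top o'))" by (auto dest: openin_subset)
  then have "sets N = sigma_sets (rays o') {U. openin (bd_top o') U}"
    unfolding st borel_of_def topspace_bd_top[symmetric] by (rule sets_measure_of)
  ultimately show "f -` U \<inter> space N \<in> sets N" using sp by (auto simp: Int_def conj_commute)
qed

lemma continuous_map_bd_top_gprod:
  assumes cat: "CAT_minus1 TYPE('a)" and geo: "geodesic_metric TYPE('a)" and t: "0 \<le> t"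
  shows "continuous_map (bd_top o') euclideanreal (\<lambda>\<xi>. gprod o' (\<xi> t) (q::'a::metric_space))"
proof (rule continuous_map_bd_top_I)
  fix \<xi>0 and r :: real assume \<xi>0: "\<xi>0 \<in> rays o'" and r: "0 < r"
  obtain R where R: "\<forall>z\<in>Xbar o'. ereal R < egprod o' z (Inr \<xi>0) \<longrightarrow> dist (geodesic_to o' z t) (\<xi>0 t) < r"
    using dist_geodesic_to_less[OF cat geo \<xi>0 t r] by blast
  have "\<bar>gprod o' (\<xi> t) q - gprod o' (\<xi>0 t) q\<bar> < r"
    if "\<xi> \<in> rays o'" "ereal R < egprod o' (Inr \<xi>) (Inr \<xi>0)" for \<xi>
    using R[rule_format, of "Inr \<xi>"] that gprod_lipschitz[of o' q "\<xi> t" "\<xi>0 t"]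
    by (simp add: Xbar_def geodesic_to_def gprod_commute)
  then show "\<exists>R. \<forall>\<xi>\<in>rays o'. ereal R < egprod o' (Inr \<xi>) (Inr \<xi>0) \<longrightarrow>
      \<bar>gprod o' (\<xi> t) q - gprod o' (\<xi>0 t) q\<bar> < r" by blast
qed

lemma egprod_measurable:
  assumes cat: "CAT_minus1 TYPE('a)" and geo: "geodesic_metric TYPE('a)"
    and sp: "space N = rays (o'::'a::metric_space)" and st: "sets N = sets (borel_of (bd_top o'))"
    and z: "z \<in> Xbar o'"
  shows "(\<lambda>\<xi>. egprod o' (Inr \<xi>) z) \<in> borel_measurable N"
proof -
  have "(\<lambda>\<xi>. SUP n\<in>(UNIV::nat set). ereal (gprod o' (\<xi> (real n)) (approx_point z (real n))))
      \<in> borel_measurable N"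
    by (rule borel_measurable_SUP) (auto intro!: borel_measurable_ereal
        borel_measurable_continuous_bd_top[OF sp st] continuous_map_bd_top_gprod[OF cat geo])
  then show ?thesis
    by (rule measurable_cong[THEN iffD1, rotated]) (simp add: egprod_eq_SUP_approx_point sp z)
qed

definition Xbar_basis :: "'a::metric_space \<Rightarrow> ('a + (real \<Rightarrow> 'a)) set set" where
  "Xbar_basis o' = {Inl ` ball x r | x r. True} \<union>
      {{z \<in> Xbar o'. egprod o' z (Inr \<xi>) > ereal R} | \<xi> R. \<xi> \<in> rays o'}"

lemma Xbar_top_eq: "Xbar_top o' = topology_generated_by (Xbar_basis o')"
  unfolding Xbar_top_def Xbar_basis_def ..

lemma Xbar_basis_subset: "V \<in> Xbar_basis o' \<Longrightarrow> V \<subseteq> Xbar o'"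
  unfolding Xbar_basis_def Xbar_def by auto

lemma topspace_Xbar_top: "topspace (Xbar_top o') = Xbar o'"
proof -
  have "z \<in> \<Union>(Xbar_basis o')" if z: "z \<in> Xbar o'" for z
    using z
  proof (cases rule: Xbar_cases)
    case (point w)
    then have "z \<in> Inl ` ball w 1" by simp
    moreover have "Inl ` ball w 1 \<in> Xbar_basis o'" unfolding Xbar_basis_def by blast
    ultimately show ?thesis by blast
  next
    case (ray \<xi>)
    then have "z \<in> {z \<in> Xbar o'. egprod o' z (Inr \<xi>) > ereal 0}"
      using z egprod_ray_self[OF ray(2)] by simp
    moreover have "{z \<in> Xbar o'. egprod o' z (Inr \<xi>) > ereal 0} \<in> Xbar_basis o'"
      unfolding Xbar_basis_def using ray by blast
    ultimately show ?thesis by blast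
  qed
  then have "\<Union>(Xbar_basis o') = Xbar o'" using Xbar_basis_subset by blast
  then show ?thesis unfolding Xbar_top_eq by simp
qed

lemma continuous_map_Xbar_top_I:
  fixes F :: "'a::metric_space + (real \<Rightarrow> 'a) \<Rightarrow> real"
  assumes "\<And>z \<epsilon>. z \<in> Xbar o' \<Longrightarrow> 0 < \<epsilon> \<Longrightarrow>
    \<exists>V\<in>Xbar_basis o'. z \<in> V \<and> (\<forall>y\<in>V. \<bar>F y - F z\<bar> < \<epsilon>)"
  shows "continuous_map (Xbar_top o') euclideanreal F"
  unfolding continuous_map_def topspace_Xbar_top
proof (intro conjI allI impI)
  fix U :: "real set" assume "openin euclideanreal U"
  then have U: "open U" by simp
  define P where "P = {z \<in> Xbar o'. F z \<in> U}"
  define K where "K = {V \<in> Xbar_basis o'. V \<subseteq> P}"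
  have "P \<subseteq> \<Union>K"
  proof
    fix z assume "z \<in> P"
    then have z: "z \<in> Xbar o'" "F z \<in> U" unfolding P_def by auto
    obtain e where e: "0 < e" "ball (F z) e \<subseteq> U" using U z(2) open_contains_ball by blast
    obtain V where V: "V \<in> Xbar_basis o'" "z \<in> V" "\<forall>y\<in>V. \<bar>F y - F z\<bar> < e"
      using assms[OF z(1) e(1)] by blast
    have "V \<subseteq> P"
      using V e(2) Xbar_basis_subset[OF V(1)] unfolding P_def
      by (auto simp: dist_real_def abs_minus_commute subset_eq)
    then show "z \<in> \<Union>K" using V unfolding K_def by blast
  qed
  then have "P = \<Union>K" unfolding K_def by auto
  moreover have "generate_topology_on (Xbar_basis o') (\<Union>K)"
    by (rule generate_topology_on.UN) (auto simp: K_def intro: generate_topology_on.Basis)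
  ultimately show "openin (Xbar_top o') {z \<in> Xbar o'. F z \<in> U}"
    unfolding P_def Xbar_top_eq openin_topology_generated_by_iff by simp
qed auto

section \<open>Compactness of the boundary\<close>

lemma rays_pointwise_limit:
  assumes xs: "\<And>n. xs n \<in> rays o'" and lim: "\<And>t. (\<lambda>n. xs n t) \<longlonglongrightarrow> \<xi> t"
  shows "\<xi> \<in> rays o'"
  unfolding rays_def
proof (intro CollectI conjI allI impI)
  fix t :: real assume "t \<le> 0"
  then have "(\<lambda>n. xs n t) \<longlonglongrightarrow> o'" using rays_nonpos[OF xs] by simp
  then show "\<xi> t = o'" by (rule LIMSEQ_unique[OF lim])
next
  fix s t :: real assume "0 \<le> s" "0 \<le> t"
  have "(\<lambda>n. dist (xs n s) (xs n t)) \<longlonglongrightarrow> dist (\<xi> s) (\<xi> t)" by (intro tendsto_dist lim)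
  then have "(\<lambda>n. \<bar>s - t\<bar>) \<longlonglongrightarrow> dist (\<xi> s) (\<xi> t)"
    using rays_dist[OF xs \<open>0 \<le> s\<close> \<open>0 \<le> t\<close>] by simp
  then show "dist (\<xi> s) (\<xi> t) = \<bar>s - t\<bar>" by (rule LIMSEQ_unique[OF tendsto_const, symmetric])
qed

text \<open>Rays are 1-Lipschitz, so pointwise convergence on the rationals propagates to all times.\<close>

lemma rays_Cauchy_if_convergent_Rats:
  assumes xs: "\<And>n. xs n \<in> rays o'" and conv: "\<And>q. q \<in> \<rat> \<Longrightarrow> convergent (\<lambda>n. xs n q)"
  shows "Cauchy (\<lambda>n. xs n t)"
proof (cases "0 \<le> t")
  case False
  then show ?thesis using rays_nonpos[OF xs, of t] by (intro metric_CauchyI) auto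
next
  case t: True
  show ?thesis
  proof (rule metric_CauchyI)
    fix e :: real assume "0 < e"
    then obtain q where q: "q \<in> \<rat>" "t < q" "q < t + e/3" using Rats_dense_in_real[of t "t + e/3"] by auto
    obtain N where N: "\<And>m n. N \<le> m \<Longrightarrow> N \<le> n \<Longrightarrow> dist (xs m q) (xs n q) < e/3"
      using metric_CauchyD[OF convergent_Cauchy[OF conv[OF q(1)]], of "e/3"] \<open>0 < e\<close> by auto
    have "0 \<le> q" using t q by linarith
    then have d: "dist (xs n t) (xs n q) < e/3" for n using rays_dist[OF xs t, of q] q by simp
    have "dist (xs m t) (xs n t) < e" if "N \<le> m" "N \<le> n" for m n
      using dist_triangle[of "xs m t" "xs n t" "xs m q"] dist_triangle[of "xs m q" "xs n t" "xs n q"]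
        d[of m] d[of n] N[OF that] by (simp add: dist_commute)
    then show "\<exists>M. \<forall>m\<ge>M. \<forall>n\<ge>M. dist (xs m t) (xs n t) < e" by blast
  qed
qed

lemma rays_convergent_subseq_Rats:
  fixes xs :: "nat \<Rightarrow> real \<Rightarrow> 'a::metric_space"
  assumes proper: "proper_metric TYPE('a)" and xs: "\<And>n. xs n \<in> rays o'"
  obtains r where "strict_mono r" "\<And>q. q \<in> \<rat> \<Longrightarrow> convergent (\<lambda>n. xs (r n) q)"
proof -
  define P where "P = (\<lambda>k (s :: nat \<Rightarrow> nat). convergent (\<lambda>n. xs (s n) (from_nat_into \<rat> k)))"
  have "\<exists>r'. strict_mono r' \<and> P k (s \<circ> r')" if "strict_mono s" for k and s :: "nat \<Rightarrow> nat"
  proof -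
    have cpt: "compact (cball o' \<bar>from_nat_into \<rat> k\<bar>)" using proper unfolding proper_metric_def by blast
    have "\<forall>n. xs (s n) (from_nat_into \<rat> k) \<in> cball o' \<bar>from_nat_into \<rat> k\<bar>"
      using rays_in_cball[OF xs] by blast
    from seq_compactE[OF compact_imp_seq_compact[OF cpt] this]
    obtain l r' where "strict_mono r'" "((\<lambda>n. xs (s n) (from_nat_into \<rat> k)) \<circ> r') \<longlonglongrightarrow> l"
      by blast
    then show ?thesis unfolding P_def by (intro exI[of _ r'] conjI) (auto simp: convergent_def o_def)
  qed
  then interpret subseqs P by unfold_locales
  have conv: "convergent (\<lambda>n. xs (diagseq n) (from_nat_into \<rat> k))" for k
  proof -
    have "P k (diagseq \<circ> (+) (Suc k))"
      by (rule diagseq_holds) (auto simp: P_def o_def intro: convergent_subseq_convergent[unfolded o_def])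
    then show ?thesis unfolding P_def o_def
      by (subst convergent_ignore_initial_segment[symmetric, of _ "Suc k"]) (simp add: add.commute)
  qed
  have "convergent (\<lambda>n. xs (diagseq n) q)" if "q \<in> \<rat>" for q
    using from_nat_into_surj[OF countable_rat that] conv by blast
  then show ?thesis using that subseq_diagseq by blast
qed

lemma rays_pointwise_convergent_subseq:
  fixes xs :: "nat \<Rightarrow> real \<Rightarrow> 'a::metric_space"
  assumes proper: "proper_metric TYPE('a)" and xs: "\<And>n. xs n \<in> rays o'"
  obtains r \<xi> where "strict_mono r" "\<xi> \<in> rays o'" "\<And>t. (\<lambda>n. xs (r n) t) \<longlonglongrightarrow> \<xi> t"
proof -
  obtain r where r: "strict_mono r" "\<And>q. q \<in> \<rat> \<Longrightarrow> convergent (\<lambda>n. xs (r n) q)"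
    using rays_convergent_subseq_Rats[where xs = xs, OF proper xs] by blast
  have xsr: "xs (r n) \<in> rays o'" for n by (rule xs)
  have "convergent (\<lambda>n. xs (r n) t)" for t
  proof -
    have "compact (cball o' \<bar>t\<bar>)" using proper unfolding proper_metric_def by blast
    moreover have "\<forall>n. xs (r n) t \<in> cball o' \<bar>t\<bar>" using rays_in_cball[OF xs] by blast
    moreover have "Cauchy (\<lambda>n. xs (r n) t)"
      by (rule rays_Cauchy_if_convergent_Rats[of "\<lambda>n. xs (r n)", OF xsr r(2)])
    ultimately obtain l where "l \<in> cball o' \<bar>t\<bar>" "(\<lambda>n. xs (r n) t) \<longlonglongrightarrow> l"
      by (rule completeE[OF compact_imp_complete])
    then show ?thesis by (auto simp: convergent_def)
  qed
  then have lim: "(\<lambda>n. xs (r n) t) \<longlonglongrightarrow> lim (\<lambda>n. xs (r n) t)" for t by (simp add: convergent_LIMSEQ_iff)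
  show ?thesis by (rule that[OF r(1) rays_pointwise_limit[of "\<lambda>n. xs (r n)", OF xsr lim] lim])
qed

lemma eventually_in_open_bd_top:
  assumes xs: "\<And>n. xs n \<in> rays o'" and \<xi>: "\<xi> \<in> rays o'" and lim: "\<And>t. (\<lambda>n. xs n t) \<longlonglongrightarrow> \<xi> t"
    and U: "openin (bd_top o') U" "\<xi> \<in> U"
  shows "\<forall>\<^sub>F n in sequentially. xs n \<in> U"
proof -
  have "generate_topology_on (bd_basis o') U" using U(1) unfolding bd_top_eq openin_topology_generated_by_iff .
  then have "\<xi> \<in> U \<longrightarrow> (\<forall>\<^sub>F n in sequentially. xs n \<in> U)"
  proof (induction rule: generate_topology_on.induct)
    case (Int a b)
    then show ?case by (auto intro: eventually_conj)
  next
    case (UN K)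
    then show ?case by (blast intro: eventually_mono)
  next
    case (Basis s)
    then obtain \<zeta> R where s: "s = {\<eta> \<in> rays o'. ereal R < egprod o' (Inr \<eta>) (Inr \<zeta>)}"
      and \<zeta>: "\<zeta> \<in> rays o'" unfolding bd_basis_def by blast
    show ?case
    proof
      assume "\<xi> \<in> s"
      then have "ereal R < egprod o' (Inr \<xi>) (Inr \<zeta>)" using s by simp
      then obtain k :: nat where k: "R < gprod o' (\<xi> (real k)) (\<zeta> (real k))"
        unfolding egprod_rays[OF \<xi> \<zeta>] by (auto simp: less_SUP_iff)
      have "(\<lambda>n. gprod o' (xs n (real k)) (\<zeta> (real k))) \<longlonglongrightarrow> gprod o' (\<xi> (real k)) (\<zeta> (real k))"
        unfolding gprod_def by (intro tendsto_intros lim) simp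
      then have "\<forall>\<^sub>F n in sequentially. R < gprod o' (xs n (real k)) (\<zeta> (real k))"
        using k by (rule order_tendstoD)
      then show "\<forall>\<^sub>F n in sequentially. xs n \<in> s"
      proof (rule eventually_mono)
        fix n assume "R < gprod o' (xs n (real k)) (\<zeta> (real k))"
        then have "ereal R < ereal (gprod o' (xs n (real k)) (\<zeta> (real k)))" by simp
        also have "\<dots> \<le> egprod o' (Inr (xs n)) (Inr \<zeta>)" by (rule gprod_le_egprod_rays[OF xs \<zeta>]) simp
        finally have "ereal R < egprod o' (Inr (xs n)) (Inr \<zeta>)" .
        then show "xs n \<in> s" using s xs by simp
      qed
    qed
  qed simp
  then show ?thesis using U(2) by blast
qed

lemma continuous_map_bd_top_bounded:
  assumes proper: "proper_metric TYPE('a)"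
    and \<phi>: "continuous_map (bd_top (o'::'a::metric_space)) euclideanreal \<phi>"
  shows "bdd_above ((\<lambda>\<xi>. \<bar>\<phi> \<xi>\<bar>) ` rays o')"
proof (rule ccontr)
  assume "\<not> ?thesis"
  then have "\<forall>n::nat. \<exists>\<xi>. \<xi> \<in> rays o' \<and> real n < \<bar>\<phi> \<xi>\<bar>" by (auto simp: bdd_above_def not_le)
  then obtain xs where "\<forall>n. xs n \<in> rays o' \<and> real n < \<bar>\<phi> (xs n)\<bar>" by (auto dest: choice)
  then have xs: "\<And>n. xs n \<in> rays o'" and big: "\<And>n. real n < \<bar>\<phi> (xs n)\<bar>" by auto
  obtain r \<xi> where r: "strict_mono r" and \<xi>: "\<xi> \<in> rays o'" and lim: "\<And>t. (\<lambda>n. xs (r n) t) \<longlonglongrightarrow> \<xi> t"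
    using rays_pointwise_convergent_subseq[where xs = xs, OF proper xs] by blast
  have "openin (bd_top o') {\<eta> \<in> topspace (bd_top o'). \<phi> \<eta> \<in> ball (\<phi> \<xi>) 1}"
    by (rule openin_continuous_map_preimage[OF \<phi>]) simp
  then have "\<forall>\<^sub>F n in sequentially. xs (r n) \<in> {\<eta> \<in> topspace (bd_top o'). \<phi> \<eta> \<in> ball (\<phi> \<xi>) 1}"
    using \<xi> by (intro eventually_in_open_bd_top[OF xs \<xi> lim]) (auto simp: topspace_bd_top)
  moreover have "\<forall>\<^sub>F n in sequentially. \<bar>\<phi> \<xi>\<bar> + 1 \<le> real n"
    by (rule eventually_sequentiallyI[of "nat \<lceil>\<bar>\<phi> \<xi>\<bar> + 1\<rceil>"]) linarith
  ultimately have "\<forall>\<^sub>F n in sequentially. \<phi> (xs (r n)) \<in> ball (\<phi> \<xi>) 1 \<and> \<bar>\<phi> \<xi>\<bar> + 1 \<le> real n"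
    by (rule eventually_elim2) auto
  then obtain n where "\<phi> (xs (r n)) \<in> ball (\<phi> \<xi>) 1" "\<bar>\<phi> \<xi>\<bar> + 1 \<le> real n"
    unfolding eventually_sequentially by blast
  then have "\<bar>\<phi> (xs (r n)) - \<phi> \<xi>\<bar> < 1" "\<bar>\<phi> \<xi>\<bar> + 1 \<le> real n"
    by (simp_all add: dist_real_def abs_minus_commute)
  moreover have "real n \<le> real (r n)" using seq_suble[OF r] by simp
  ultimately show False using big[of "r n"] by linarith
qed

section \<open>Tail estimates for the Patterson--Sullivan measure\<close>

lemma busemann_eq_egprod:
  assumes \<xi>: "\<xi> \<in> rays o'" and g: "egprod o' (Inr \<xi>) (Inl x) = ereal g"
  shows "busemann \<xi> x o' = dist x o' - 2 * g"
proof -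
  have "((\<lambda>t. ereal (gprod o' (\<xi> t) x)) \<longlongrightarrow> ereal g) at_top"
    using tendsto_SUP_nat_mono[of "\<lambda>t. ereal (gprod o' (\<xi> t) x)"] gprod_mono_rays[OF \<xi>] g
      egprod_ray_point[OF \<xi>] by auto
  then have "((\<lambda>t. dist x o' - 2 * gprod o' (\<xi> t) x) \<longlongrightarrow> dist x o' - 2 * g) at_top"
    by (intro tendsto_intros) (simp add: lim_ereal)
  moreover have "\<forall>\<^sub>F t in at_top. dist x o' - 2 * gprod o' (\<xi> t) x = dist x (\<xi> t) - dist o' (\<xi> t)"
    using eventually_ge_at_top[of "0::real"]
    by eventually_elim (simp add: gprod_def rays_dist_base[OF \<xi>] dist_commute field_simps)
  ultimately have "((\<lambda>t. dist x (\<xi> t) - dist o' (\<xi> t)) \<longlongrightarrow> dist x o' - 2 * g) at_top"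
    by (rule Lim_transform_eventually)
  then show ?thesis unfolding busemann_def by (rule tendsto_Lim[rotated]) simp
qed

lemma e2ennreal_le_layers:
  fixes y :: ereal
  assumes S: "0 \<le> S"
  shows "e2ennreal y * (if ereal S \<le> y then 1 else 0)
    \<le> ennreal S * (if ereal S \<le> y then 1 else 0) + (\<Sum>n. if ereal (S + real n) \<le> y then 1 else (0::ennreal))"
proof (cases y)
  case (real r)
  show ?thesis
  proof (cases "S \<le> r")
    case True
    define N where "N = nat \<lfloor>r - S\<rfloor> + 1"
    have "(\<Sum>n. if ereal (S + real n) \<le> y then 1 else (0::ennreal))
        = (\<Sum>n<N. if ereal (S + real n) \<le> y then 1 else 0)"
    proof (rule suminf_finite)
      fix n assume "n \<notin> {..<N}"
      then have "N \<le> n" by simp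
      then have "r < S + real n" unfolding N_def by linarith
      then show "(if ereal (S + real n) \<le> y then 1 else (0::ennreal)) = 0" using real by simp
    qed simp
    also have "\<dots> = (\<Sum>n<N. (1::ennreal))"
    proof (rule sum.cong)
      fix n assume "n \<in> {..<N}"
      then have "n < N" by simp
      then have "S + real n \<le> r" unfolding N_def using True by linarith
      then show "(if ereal (S + real n) \<le> y then 1 else (0::ennreal)) = 1" using real by simp
    qed simp
    finally have "(\<Sum>n. if ereal (S + real n) \<le> y then 1 else (0::ennreal)) = ennreal (real N)"
      by (simp add: ennreal_of_nat_eq_real_of_nat)
    moreover have "e2ennreal y \<le> ennreal S + ennreal (real N)"
    proof -
      have "r \<le> S + real N" unfolding N_def by linarith
      then have "ennreal r \<le> ennreal (S + real N)" by (rule ennreal_leI)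
      then show ?thesis using S real by (simp add: e2ennreal_ereal ennreal_plus)
    qed
    ultimately show ?thesis using True real by simp
  qed (use real in simp)
next
  case PInf
  have "(\<Sum>n. ennreal 1) = top"
    by (rule summable_iff_suminf_neq_top) (auto simp: summable_const_iff)
  then show ?thesis using PInf by simp
qed simp

lemma nn_integral_tail_le:
  fixes g :: "'b \<Rightarrow> ereal"
  assumes g[measurable]: "g \<in> borel_measurable M" and S: "0 \<le> S" and d: "0 < d" and a: "0 \<le> a"
    and tail: "\<And>t. S \<le> t \<Longrightarrow> emeasure M {x \<in> space M. ereal t \<le> g x} \<le> ennreal (a * exp (- d * t))"
  shows "(\<integral>\<^sup>+x. e2ennreal (g x) * indicator {x \<in> space M. ereal S \<le> g x} x \<partial>M)
           \<le> ennreal (a * exp (- d * S) * (S + 1 / (1 - exp (- d))))"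
proof -
  define A where "A t = {x \<in> space M. ereal t \<le> g x}" for t
  have [measurable]: "A t \<in> sets M" for t unfolding A_def by measurable
  have "(\<integral>\<^sup>+x. e2ennreal (g x) * indicator (A S) x \<partial>M)
      \<le> (\<integral>\<^sup>+x. ennreal S * indicator (A S) x + (\<Sum>n. indicator (A (S + real n)) x) \<partial>M)"
  proof (rule nn_integral_mono)
    fix x assume "x \<in> space M"
    then have ind: "indicator (A t) x = (if ereal t \<le> g x then 1 else (0::ennreal))" for t
      by (simp add: A_def)
    show "e2ennreal (g x) * indicator (A S) x \<le> ennreal S * indicator (A S) x + (\<Sum>n. indicator (A (S + real n)) x)"
      unfolding ind by (rule e2ennreal_le_layers[OF S])
  qed
  also have "\<dots> = ennreal S * emeasure M (A S) + (\<Sum>n. emeasure M (A (S + real n)))"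
    by (simp add: nn_integral_add nn_integral_suminf nn_integral_cmult_indicator)
  also have "\<dots> \<le> ennreal S * ennreal (a * exp (- d * S))
      + (\<Sum>n. ennreal (a * exp (- d * S) * exp (- d) ^ n))"
  proof (intro add_mono mult_left_mono suminf_le)
    fix n :: nat
    have "exp (- d * (S + real n)) = exp (- d * S) * exp (- d) ^ n"
      by (simp add: exp_of_nat_mult[symmetric] mult_exp_exp algebra_simps)
    then show "emeasure M (A (S + real n)) \<le> ennreal (a * exp (- d * S) * exp (- d) ^ n)"
      using tail[of "S + real n"] by (simp add: A_def mult.assoc)
  qed (use tail[of S] in \<open>auto simp: A_def\<close>)
  also have "(\<Sum>n. ennreal (a * exp (- d * S) * exp (- d) ^ n)) = ennreal (a * exp (- d * S) * (1 / (1 - exp (- d))))"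
    using d a by (intro suminf_ennreal_eq sums_mult geometric_sums) auto
  also have "ennreal S * ennreal (a * exp (- d * S)) + \<dots> = ennreal (a * exp (- d * S) * (S + 1 / (1 - exp (- d))))"
    using S a d by (simp add: ennreal_mult[symmetric] ennreal_plus[symmetric] algebra_simps del: ennreal_plus)
  finally show ?thesis unfolding A_def .
qed

locale PS_setting =
  fixes o' :: "'a::metric_space" and G :: "('a \<Rightarrow> 'a) set" and \<mu> :: "'a \<Rightarrow> (real \<Rightarrow> 'a) measure"
  assumes cat: "CAT_minus1 TYPE('a)" and geo: "geodesic_metric TYPE('a)"
    and PS: "PS_density o' G \<mu>" and crit_exp_pos: "0 < crit_exp o' G"
begin

abbreviation \<delta> :: real where "\<delta> \<equiv> crit_exp o' G"

lemma prob_space_\<mu>: "prob_space (\<mu> x)"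
  and space_\<mu>: "space (\<mu> x) = rays o'"
  and sets_\<mu>: "sets (\<mu> x) = sets (borel_of (bd_top o'))"
  and density_\<mu>: "\<mu> x = density (\<mu> y) (\<lambda>\<xi>. ennreal (exp (- \<delta> * busemann \<xi> x y)))"
  using PS unfolding PS_density_def by auto

lemma egprod_measurable_\<mu>: "z \<in> Xbar o' \<Longrightarrow> (\<lambda>\<xi>. egprod o' (Inr \<xi>) z) \<in> borel_measurable (\<mu> x)"
  by (rule egprod_measurable[OF cat geo space_\<mu> sets_\<mu>])

lemma sets_egprod_ge_\<mu>: "z \<in> Xbar o' \<Longrightarrow> {\<xi> \<in> rays o'. c \<le> egprod o' (Inr \<xi>) z} \<in> sets (\<mu> x)"
  using egprod_measurable_\<mu>[of z x] unfolding space_\<mu>[symmetric, of x] by measurable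

text \<open>The upper half of Sullivan's shadow lemma: since \<open>\<mu> x\<close> is a probability measure with density
  \<open>exp (- \<delta> * busemann \<xi> x o')\<close> with respect to \<open>\<mu> o'\<close>, the directions \<open>\<xi>\<close> in which the Busemann
  function is small have small \<open>\<mu> o'\<close>-measure.\<close>

lemma emeasure_shadow_le:
  "emeasure (\<mu> o') {\<xi> \<in> rays o'. ereal c \<le> egprod o' (Inr \<xi>) (Inl x)}
     \<le> ennreal (exp (\<delta> * (dist x o' - 2 * c)))"
proof -
  define A where "A = {\<xi> \<in> rays o'. ereal c \<le> egprod o' (Inr \<xi>) (Inl x)}"
  define f where "f = (\<lambda>\<xi>. ennreal (exp (- \<delta> * busemann \<xi> x o')))"
  have xX: "Inl x \<in> Xbar o'" by (simp add: Xbar_def)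
  have A: "A \<in> sets (\<mu> o')" unfolding A_def by (rule sets_egprod_ge_\<mu>[OF xX])
  have busemann: "busemann \<xi> x o' = dist x o' - 2 * real_of_ereal (egprod o' (Inr \<xi>) (Inl x))"
    if "\<xi> \<in> rays o'" for \<xi>
    using busemann_eq_egprod[OF that egprod_ray_point_finite[OF that]] .
  have "(\<lambda>\<xi>. ennreal (exp (- \<delta> * (dist x o' - 2 * real_of_ereal (egprod o' (Inr \<xi>) (Inl x))))))
      \<in> borel_measurable (\<mu> o')"
    using egprod_measurable_\<mu>[OF xX] by measurable
  then have f: "f \<in> borel_measurable (\<mu> o')"
    by (rule measurable_cong[THEN iffD1, rotated]) (simp add: f_def busemann space_\<mu>)
  have "ennreal (exp (- \<delta> * (dist x o' - 2 * c))) * emeasure (\<mu> o') A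
      = (\<integral>\<^sup>+\<xi>. ennreal (exp (- \<delta> * (dist x o' - 2 * c))) * indicator A \<xi> \<partial>\<mu> o')"
    by (rule nn_integral_cmult_indicator[OF A, symmetric])
  also have "\<dots> \<le> (\<integral>\<^sup>+\<xi>. f \<xi> * indicator (rays o') \<xi> \<partial>\<mu> o')"
  proof (rule nn_integral_mono)
    fix \<xi> assume "\<xi> \<in> space (\<mu> o')"
    then have \<xi>: "\<xi> \<in> rays o'" by (simp add: space_\<mu>)
    have "- \<delta> * (dist x o' - 2 * c) \<le> - \<delta> * busemann \<xi> x o'" if "\<xi> \<in> A"
      using that \<xi> crit_exp_pos egprod_ray_point_finite[OF \<xi>, of x]
      by (auto simp: A_def busemann mult_le_cancel_left_pos)
        (metis ereal_less_eq(3))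
    then show "ennreal (exp (- \<delta> * (dist x o' - 2 * c))) * indicator A \<xi> \<le> f \<xi> * indicator (rays o') \<xi>"
      using \<xi> by (auto simp: f_def indicator_def intro!: ennreal_leI)
  qed
  also have "\<dots> = emeasure (\<mu> x) (rays o')"
    using emeasure_density[OF f, of "rays o'"] sets.top[of "\<mu> o'"] density_\<mu>[of x o'] space_\<mu>[of o']
    by (simp add: f_def)
  also have "\<dots> = 1" using prob_space.emeasure_space_1[OF prob_space_\<mu>[of x]] by (simp add: space_\<mu>)
  finally have "ennreal (exp (- \<delta> * (dist x o' - 2 * c))) * emeasure (\<mu> o') A \<le> 1" .
  then have "ennreal (exp (\<delta> * (dist x o' - 2 * c))) * (ennreal (exp (- \<delta> * (dist x o' - 2 * c))) * emeasure (\<mu> o') A)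
      \<le> ennreal (exp (\<delta> * (dist x o' - 2 * c)))"
    by (metis mult.right_neutral mult_left_mono zero_le)
  then show ?thesis
    unfolding A_def[symmetric] by (simp add: mult.assoc[symmetric] ennreal_mult'[symmetric] mult_exp_exp)
qed

lemma emeasure_egprod_ge_le:
  assumes z: "z \<in> Xbar o'" and S: "0 \<le> S"
  shows "emeasure (\<mu> o') {\<xi> \<in> rays o'. ereal S \<le> egprod o' (Inr \<xi>) z} \<le> ennreal (exp (4 * \<delta>) * exp (- \<delta> * S))"
proof (cases "ereal S \<le> egprod o' z z")
  case True
  define x where "x = geodesic_to o' z S"
  have "emeasure (\<mu> o') {\<xi> \<in> rays o'. ereal S \<le> egprod o' (Inr \<xi>) z}
      \<le> emeasure (\<mu> o') {\<xi> \<in> rays o'. ereal (S - 2) \<le> egprod o' (Inr \<xi>) (Inl x)}"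
    using egprod_geodesic_to_ge[OF cat geo _ z S] unfolding x_def
    by (intro emeasure_mono sets_egprod_ge_\<mu>) (auto simp: Xbar_def)
  also have "\<dots> \<le> ennreal (exp (\<delta> * (dist x o' - 2 * (S - 2))))" by (rule emeasure_shadow_le)
  also have "dist x o' = S" unfolding x_def by (rule dist_geodesic_to[OF geo z S True])
  finally show ?thesis by (simp add: mult_exp_exp algebra_simps)
next
  case False
  then have "{\<xi> \<in> rays o'. ereal S \<le> egprod o' (Inr \<xi>) z} = {}"
    using egprod_le_self[OF _ z] by (auto dest: order_trans)
  then show ?thesis by (simp del: Collect_empty_eq)
qed

definition PS_tail :: "real \<Rightarrow> real" where
  "PS_tail S = exp (4 * \<delta>) * exp (- \<delta> * S) * (S + 1 / (1 - exp (- \<delta>)))"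

lemma PS_tail_nonneg: "0 \<le> S \<Longrightarrow> 0 \<le> PS_tail S"
  using crit_exp_pos by (simp add: PS_tail_def)

lemma tendsto_PS_tail: "(PS_tail \<longlongrightarrow> 0) at_top"
  unfolding PS_tail_def using crit_exp_pos by real_asymp

lemma nn_integral_egprod_tail_le:
  assumes "z \<in> Xbar o'" "0 \<le> S"
  shows "(\<integral>\<^sup>+\<xi>. e2ennreal (egprod o' (Inr \<xi>) z) * indicator {\<xi> \<in> rays o'. ereal S \<le> egprod o' (Inr \<xi>) z} \<xi> \<partial>\<mu> o')
     \<le> ennreal (PS_tail S)"
  using nn_integral_tail_le[OF egprod_measurable_\<mu>[OF assms(1)] assms(2) crit_exp_pos, of "exp (4 * \<delta>)"]
    emeasure_egprod_ge_le[OF assms(1)] assms(2) by (simp add: space_\<mu> PS_tail_def)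

lemma nn_integral_egprod_le:
  assumes "z \<in> Xbar o'"
  shows "(\<integral>\<^sup>+\<xi>. e2ennreal (egprod o' (Inr \<xi>) z) \<partial>\<mu> o') \<le> ennreal (PS_tail 0)"
proof -
  have "(\<integral>\<^sup>+\<xi>. e2ennreal (egprod o' (Inr \<xi>) z) \<partial>\<mu> o')
      = (\<integral>\<^sup>+\<xi>. e2ennreal (egprod o' (Inr \<xi>) z) * indicator {\<xi> \<in> rays o'. ereal 0 \<le> egprod o' (Inr \<xi>) z} \<xi> \<partial>\<mu> o')"
    by (rule nn_integral_cong) (simp add: space_\<mu> egprod_nonneg[OF _ assms] zero_ereal_def[symmetric])
  also have "\<dots> \<le> ennreal (PS_tail 0)" by (rule nn_integral_egprod_tail_le[OF assms order.refl])
  finally show ?thesis .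
qed

end
lemma ennreal_real_of_ereal_le: "ennreal (real_of_ereal y) \<le> e2ennreal y"
  by (cases y) (auto simp: e2ennreal_ereal)

lemma ennreal_abs_diff_le_tails:
  fixes a b :: ereal
  assumes "0 \<le> a" "0 \<le> b"
  shows "ennreal \<bar>real_of_ereal a - real_of_ereal b\<bar>
    \<le> e2ennreal b + (ennreal S + e2ennreal a * indicator {x. ereal S \<le> x} a)"
proof -
  have ab: "0 \<le> real_of_ereal a" "0 \<le> real_of_ereal b" using assms by (simp_all add: real_of_ereal_pos)
  have "ennreal \<bar>real_of_ereal a - real_of_ereal b\<bar> \<le> ennreal (real_of_ereal b) + ennreal (real_of_ereal a)"
    using ab by (simp add: ennreal_plus[symmetric] del: ennreal_plus)
  also have "\<dots> \<le> e2ennreal b + (ennreal S + e2ennreal a * indicator {x. ereal S \<le> x} a)"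
  proof (rule add_mono)
    show "ennreal (real_of_ereal a) \<le> ennreal S + e2ennreal a * indicator {x. ereal S \<le> x} a"
    proof (cases "ereal S \<le> a")
      case True
      then show ?thesis using ennreal_real_of_ereal_le[of a] by (simp add: add_increasing)
    next
      case False
      then have "real_of_ereal a \<le> S" using assms(1) by (cases a) auto
      then show ?thesis by (simp add: ennreal_leI add_increasing2)
    qed
  qed (rule ennreal_real_of_ereal_le)
  finally show ?thesis .
qed

context PS_setting
begin

lemma nn_integral_abs_diff_egprod_le:
  assumes y: "y \<in> Xbar o'" and z: "z \<in> Xbar o'" and M: "0 \<le> M" and S: "0 \<le> S" and e: "0 \<le> e"
    and close: "\<And>\<xi>. \<xi> \<in> rays o' \<Longrightarrow> egprod o' (Inr \<xi>) z \<le> ereal M \<Longrightarrow>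
      \<bar>real_of_ereal (egprod o' (Inr \<xi>) y) - real_of_ereal (egprod o' (Inr \<xi>) z)\<bar> \<le> e"
  shows "(\<integral>\<^sup>+\<xi>. ennreal \<bar>real_of_ereal (egprod o' (Inr \<xi>) y) - real_of_ereal (egprod o' (Inr \<xi>) z)\<bar> \<partial>\<mu> o')
    \<le> ennreal (e + PS_tail M + S * (exp (4 * \<delta>) * exp (- \<delta> * M)) + PS_tail S)"
proof -
  define gy gz where "gy \<xi> = egprod o' (Inr \<xi>) y" and "gz \<xi> = egprod o' (Inr \<xi>) z" for \<xi>
  define Ay Az where "Ay = {\<xi> \<in> rays o'. ereal S \<le> gy \<xi>}" and "Az = {\<xi> \<in> rays o'. ereal M \<le> gz \<xi>}"
  have [measurable]: "gy \<in> borel_measurable (\<mu> o')" "gz \<in> borel_measurable (\<mu> o')"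
    unfolding gy_def gz_def by (intro egprod_measurable_\<mu> y z)+
  have [measurable]: "Ay \<in> sets (\<mu> o')" "Az \<in> sets (\<mu> o')"
    unfolding Ay_def Az_def gy_def gz_def by (intro sets_egprod_ge_\<mu> y z)+
  have "(\<integral>\<^sup>+\<xi>. ennreal \<bar>real_of_ereal (gy \<xi>) - real_of_ereal (gz \<xi>)\<bar> \<partial>\<mu> o')
    \<le> (\<integral>\<^sup>+\<xi>. ennreal e + (e2ennreal (gz \<xi>) * indicator Az \<xi> + ennreal S * indicator Az \<xi>)
              + e2ennreal (gy \<xi>) * indicator Ay \<xi> \<partial>\<mu> o')"
  proof (rule nn_integral_mono)
    fix \<xi> assume "\<xi> \<in> space (\<mu> o')"
    then have \<xi>: "\<xi> \<in> rays o'" by (simp add: space_\<mu>)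
    show "ennreal \<bar>real_of_ereal (gy \<xi>) - real_of_ereal (gz \<xi>)\<bar>
      \<le> ennreal e + (e2ennreal (gz \<xi>) * indicator Az \<xi> + ennreal S * indicator Az \<xi>)
        + e2ennreal (gy \<xi>) * indicator Ay \<xi>"
    proof (cases "gz \<xi> \<le> ereal M")
      case True
      then show ?thesis using close[OF \<xi>] by (auto simp: gy_def gz_def intro!: add_increasing2 ennreal_leI)
    next
      case False
      then have "\<xi> \<in> Az" using \<xi> by (simp add: Az_def)
      then show ?thesis
        using ennreal_abs_diff_le_tails[OF egprod_nonneg[OF \<xi> y] egprod_nonneg[OF \<xi> z], of S] \<xi>
        by (simp add: gy_def gz_def Ay_def indicator_def add.assoc add_increasing)
    qed
  qed
  also have "\<dots> = ennreal e + ((\<integral>\<^sup>+\<xi>. e2ennreal (gz \<xi>) * indicator Az \<xi> \<partial>\<mu> o') + ennreal S * emeasure (\<mu> o') Az)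
      + (\<integral>\<^sup>+\<xi>. e2ennreal (gy \<xi>) * indicator Ay \<xi> \<partial>\<mu> o')"
    using prob_space.emeasure_space_1[OF prob_space_\<mu>]
    by (simp add: nn_integral_add nn_integral_cmult_indicator)
  also have "\<dots> \<le> ennreal e + (ennreal (PS_tail M) + ennreal S * ennreal (exp (4 * \<delta>) * exp (- \<delta> * M)))
      + ennreal (PS_tail S)"
    using nn_integral_egprod_tail_le[OF z M] emeasure_egprod_ge_le[OF z M] nn_integral_egprod_tail_le[OF y S]
    unfolding Ay_def Az_def gy_def gz_def by (intro add_mono mult_left_mono order.refl) auto
  also have "\<dots> = ennreal (e + PS_tail M + S * (exp (4 * \<delta>) * exp (- \<delta> * M)) + PS_tail S)"
    using e S PS_tail_nonneg[OF M] PS_tail_nonneg[OF S] by (simp add: ennreal_mult add.assoc)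
  finally show ?thesis by (simp add: gy_def gz_def)
qed

lemma nn_integral_abs_diff_egprod_small:
  assumes \<eta>: "\<eta> \<in> rays o'" and \<epsilon>: "0 < \<epsilon>"
  shows "\<exists>R. \<forall>y\<in>Xbar o'. ereal R < egprod o' y (Inr \<eta>) \<longrightarrow>
     (\<integral>\<^sup>+\<xi>. ennreal \<bar>real_of_ereal (egprod o' (Inr \<xi>) y) - real_of_ereal (egprod o' (Inr \<xi>) (Inr \<eta>))\<bar> \<partial>\<mu> o')
       \<le> ennreal \<epsilon>"
proof -
  have tail: "\<forall>\<^sub>F S in at_top. PS_tail S < \<epsilon>/4"
    using \<epsilon> by (intro order_tendstoD(2)[OF tendsto_PS_tail]) simp
  then have "\<forall>\<^sub>F S in at_top. 0 \<le> S \<and> PS_tail S < \<epsilon>/4"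
    by (intro eventually_conj eventually_ge_at_top)
  then obtain S where S: "0 \<le> S" "PS_tail S < \<epsilon>/4" unfolding eventually_at_top_linorder by blast
  have "((\<lambda>M. S * (exp (4 * \<delta>) * exp (- \<delta> * M))) \<longlongrightarrow> 0) at_top" using crit_exp_pos by real_asymp
  then have "\<forall>\<^sub>F M in at_top. S * (exp (4 * \<delta>) * exp (- \<delta> * M)) < \<epsilon>/4"
    by (rule order_tendstoD(2)) (use \<epsilon> in simp)
  then have "\<forall>\<^sub>F M in at_top. 0 \<le> M \<and> PS_tail M < \<epsilon>/4 \<and> S * (exp (4 * \<delta>) * exp (- \<delta> * M)) < \<epsilon>/4"
    using tail eventually_ge_at_top[of "0::real"] by eventually_elim auto
  then obtain M where M: "0 \<le> M" "PS_tail M < \<epsilon>/4" "S * (exp (4 * \<delta>) * exp (- \<delta> * M)) < \<epsilon>/4"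
    unfolding eventually_at_top_linorder by blast
  obtain R where R: "\<forall>y\<in>Xbar o'. ereal R < egprod o' y (Inr \<eta>) \<longrightarrow>
      (\<forall>\<xi>\<in>rays o'. egprod o' (Inr \<xi>) (Inr \<eta>) \<le> ereal M \<longrightarrow>
        \<bar>real_of_ereal (egprod o' (Inr \<xi>) y) - real_of_ereal (egprod o' (Inr \<xi>) (Inr \<eta>))\<bar> \<le> \<epsilon>/4)"
    using egprod_uniform_continuity[OF cat geo \<eta>, of "\<epsilon>/4" M] \<epsilon> by auto
  show ?thesis
  proof (intro exI[of _ R] ballI impI)
    fix y assume y: "y \<in> Xbar o'" "ereal R < egprod o' y (Inr \<eta>)"
    have "Inr \<eta> \<in> Xbar o'" using \<eta> by (simp add: Xbar_def)
    from nn_integral_abs_diff_egprod_le[OF y(1) this M(1) S(1), of "\<epsilon>/4"] R y \<epsilon>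
    have "(\<integral>\<^sup>+\<xi>. ennreal \<bar>real_of_ereal (egprod o' (Inr \<xi>) y)
        - real_of_ereal (egprod o' (Inr \<xi>) (Inr \<eta>))\<bar> \<partial>\<mu> o')
      \<le> ennreal (\<epsilon>/4 + PS_tail M + S * (exp (4 * \<delta>) * exp (- \<delta> * M)) + PS_tail S)" by simp
    also have "\<dots> \<le> ennreal \<epsilon>" using S M by (intro ennreal_leI) linarith
    finally show "(\<integral>\<^sup>+\<xi>. ennreal \<bar>real_of_ereal (egprod o' (Inr \<xi>) y)
        - real_of_ereal (egprod o' (Inr \<xi>) (Inr \<eta>))\<bar> \<partial>\<mu> o') \<le> ennreal \<epsilon>" .
  qed
qed

end

lemma egprod_ray_point_lipschitz:
  assumes \<xi>: "\<xi> \<in> rays o'"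
  shows "\<bar>real_of_ereal (egprod o' (Inr \<xi>) (Inl w)) - real_of_ereal (egprod o' (Inr \<xi>) (Inl w'))\<bar> \<le> dist w w'"
proof -
  have le: "real_of_ereal (egprod o' (Inr \<xi>) (Inl a)) \<le> real_of_ereal (egprod o' (Inr \<xi>) (Inl b)) + dist a b"
    for a b
  proof -
    have "egprod o' (Inr \<xi>) (Inl a) \<le> ereal (real_of_ereal (egprod o' (Inr \<xi>) (Inl b)) + dist a b)"
      unfolding egprod_ray_point[OF \<xi>, of a]
    proof (rule SUP_least)
      fix n :: nat
      have "ereal (gprod o' (\<xi> (real n)) b) \<le> ereal (real_of_ereal (egprod o' (Inr \<xi>) (Inl b)))"
        using gprod_le_egprod_ray_point[OF \<xi>, of "real n" b] egprod_ray_point_finite[OF \<xi>, of b] by simp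
      then show "ereal (gprod o' (\<xi> (real n)) a) \<le> ereal (real_of_ereal (egprod o' (Inr \<xi>) (Inl b)) + dist a b)"
        using gprod_lipschitz[of o' "\<xi> (real n)" a b] by simp
    qed
    then show ?thesis using egprod_ray_point_finite[OF \<xi>, of a] by (metis ereal_less_eq(3))
  qed
  show ?thesis using le[of w w'] le[of w' w] by (simp add: abs_le_iff dist_commute)
qed

context PS_setting
begin

lemma nn_integral_Iprime_le:
  assumes \<phi>: "\<phi> \<in> borel_measurable (\<mu> o')" "\<And>\<xi>. \<xi> \<in> rays o' \<Longrightarrow> \<bar>\<phi> \<xi>\<bar> \<le> B" "0 \<le> B"
    and z: "z \<in> Xbar o'"
  shows "(\<integral>\<^sup>+\<xi>. ennreal \<bar>\<phi> \<xi>\<bar> * e2ennreal (egprod o' (Inr \<xi>) z) \<partial>\<mu> o')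
    \<le> ennreal (B * PS_tail 0)"
proof -
  have [measurable]: "(\<lambda>\<xi>. egprod o' (Inr \<xi>) z) \<in> borel_measurable (\<mu> o')" by (rule egprod_measurable_\<mu>[OF z])
  have "(\<integral>\<^sup>+\<xi>. ennreal \<bar>\<phi> \<xi>\<bar> * e2ennreal (egprod o' (Inr \<xi>) z) \<partial>\<mu> o')
      \<le> (\<integral>\<^sup>+\<xi>. ennreal B * e2ennreal (egprod o' (Inr \<xi>) z) \<partial>\<mu> o')"
    using \<phi>(2) by (intro nn_integral_mono mult_right_mono ennreal_leI) (auto simp: space_\<mu>)
  also have "\<dots> = ennreal B * (\<integral>\<^sup>+\<xi>. e2ennreal (egprod o' (Inr \<xi>) z) \<partial>\<mu> o')"
    by (rule nn_integral_cmult) measurable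
  also have "\<dots> \<le> ennreal B * ennreal (PS_tail 0)"
    using nn_integral_egprod_le[OF z] by (rule mult_left_mono) simp
  also have "\<dots> = ennreal (B * PS_tail 0)"
    using \<phi>(3) PS_tail_nonneg[of 0] by (intro ennreal_mult[symmetric]) auto
  finally show ?thesis .
qed

lemma integrable_Iprime:
  assumes \<phi>: "\<phi> \<in> borel_measurable (\<mu> o')" "\<And>\<xi>. \<xi> \<in> rays o' \<Longrightarrow> \<bar>\<phi> \<xi>\<bar> \<le> B" "0 \<le> B"
    and z: "z \<in> Xbar o'"
  shows "integrable (\<mu> o') (\<lambda>\<xi>. \<phi> \<xi> * real_of_ereal (egprod o' (Inr \<xi>) z))"
    and "(\<integral>\<^sup>+\<xi>. norm (\<phi> \<xi> * real_of_ereal (egprod o' (Inr \<xi>) z)) \<partial>\<mu> o')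
      \<le> ennreal (B * PS_tail 0)"
proof -
  have [measurable]: "(\<lambda>\<xi>. egprod o' (Inr \<xi>) z) \<in> borel_measurable (\<mu> o')" by (rule egprod_measurable_\<mu>[OF z])
  have "(\<integral>\<^sup>+\<xi>. norm (\<phi> \<xi> * real_of_ereal (egprod o' (Inr \<xi>) z)) \<partial>\<mu> o')
      \<le> (\<integral>\<^sup>+\<xi>. ennreal \<bar>\<phi> \<xi>\<bar> * e2ennreal (egprod o' (Inr \<xi>) z) \<partial>\<mu> o')"
  proof (rule nn_integral_mono)
    fix \<xi> assume "\<xi> \<in> space (\<mu> o')"
    then have "0 \<le> real_of_ereal (egprod o' (Inr \<xi>) z)"
      using egprod_nonneg[OF _ z] by (simp add: space_\<mu> real_of_ereal_pos)
    then have "ennreal (norm (\<phi> \<xi> * real_of_ereal (egprod o' (Inr \<xi>) z)))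
        = ennreal \<bar>\<phi> \<xi>\<bar> * ennreal (real_of_ereal (egprod o' (Inr \<xi>) z))"
      by (simp only: real_norm_def abs_mult abs_of_nonneg ennreal_mult abs_ge_zero)
    also have "\<dots> \<le> ennreal \<bar>\<phi> \<xi>\<bar> * e2ennreal (egprod o' (Inr \<xi>) z)"
      by (intro mult_left_mono ennreal_real_of_ereal_le) simp
    finally show "ennreal (norm (\<phi> \<xi> * real_of_ereal (egprod o' (Inr \<xi>) z)))
        \<le> ennreal \<bar>\<phi> \<xi>\<bar> * e2ennreal (egprod o' (Inr \<xi>) z)" .
  qed
  also have "\<dots> \<le> ennreal (B * PS_tail 0)" by (rule nn_integral_Iprime_le[OF \<phi> z])
  finally show "(\<integral>\<^sup>+\<xi>. norm (\<phi> \<xi> * real_of_ereal (egprod o' (Inr \<xi>) z)) \<partial>\<mu> o')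
      \<le> ennreal (B * PS_tail 0)" .
  then show "integrable (\<mu> o') (\<lambda>\<xi>. \<phi> \<xi> * real_of_ereal (egprod o' (Inr \<xi>) z))"
    using \<phi>(1) by (intro integrableI_bounded) (auto simp: top.not_eq_extremum intro: le_less_trans)
qed

lemma abs_Iprime_le:
  assumes "\<phi> \<in> borel_measurable (\<mu> o')" "\<And>\<xi>. \<xi> \<in> rays o' \<Longrightarrow> \<bar>\<phi> \<xi>\<bar> \<le> B" "0 \<le> B" "z \<in> Xbar o'"
  shows "\<bar>Iprime o' \<mu> \<phi> z\<bar> \<le> PS_tail 0 * B"
proof -
  have "ennreal \<bar>Iprime o' \<mu> \<phi> z\<bar> \<le> (\<integral>\<^sup>+\<xi>. norm (\<phi> \<xi> * real_of_ereal (egprod o' (Inr \<xi>) z)) \<partial>\<mu> o')"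
    unfolding Iprime_def using integral_norm_bound_ennreal[OF integrable_Iprime(1)[OF assms]] by simp
  also have "\<dots> \<le> ennreal (B * PS_tail 0)" by (rule integrable_Iprime(2)[OF assms])
  finally show ?thesis using assms(3) PS_tail_nonneg[of 0] by (simp add: ennreal_le_iff mult.commute)
qed

lemma abs_Iprime_diff_le:
  assumes \<phi>: "\<phi> \<in> borel_measurable (\<mu> o')" "\<And>\<xi>. \<xi> \<in> rays o' \<Longrightarrow> \<bar>\<phi> \<xi>\<bar> \<le> B" "0 \<le> B"
    and y: "y \<in> Xbar o'" and z: "z \<in> Xbar o'"
  shows "ennreal \<bar>Iprime o' \<mu> \<phi> y - Iprime o' \<mu> \<phi> z\<bar> \<le> ennreal B *
    (\<integral>\<^sup>+\<xi>. ennreal \<bar>real_of_ereal (egprod o' (Inr \<xi>) y) - real_of_ereal (egprod o' (Inr \<xi>) z)\<bar> \<partial>\<mu> o')"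
proof -
  define f where "f x \<xi> = real_of_ereal (egprod o' (Inr \<xi>) x)" for x \<xi>
  have [measurable]: "f x \<in> borel_measurable (\<mu> o')" if "x \<in> Xbar o'" for x
    using egprod_measurable_\<mu>[OF that] unfolding f_def by measurable
  have int: "integrable (\<mu> o') (\<lambda>\<xi>. \<phi> \<xi> * f x \<xi>)" if "x \<in> Xbar o'" for x
    using integrable_Iprime(1)[OF \<phi> that] unfolding f_def .
  have "ennreal \<bar>Iprime o' \<mu> \<phi> y - Iprime o' \<mu> \<phi> z\<bar> = ennreal \<bar>\<integral>\<xi>. \<phi> \<xi> * f y \<xi> - \<phi> \<xi> * f z \<xi> \<partial>\<mu> o'\<bar>"
    unfolding Iprime_def f_def[symmetric] using int[OF y] int[OF z] by simp
  also have "\<dots> \<le> (\<integral>\<^sup>+\<xi>. ennreal (norm (\<phi> \<xi> * f y \<xi> - \<phi> \<xi> * f z \<xi>)) \<partial>\<mu> o')"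
    using integral_norm_bound_ennreal[OF Bochner_Integration.integrable_diff[OF int[OF y] int[OF z]]] by simp
  also have "\<dots> \<le> (\<integral>\<^sup>+\<xi>. ennreal B * ennreal \<bar>f y \<xi> - f z \<xi>\<bar> \<partial>\<mu> o')"
  proof (rule nn_integral_mono)
    fix \<xi> assume "\<xi> \<in> space (\<mu> o')"
    then have "\<bar>\<phi> \<xi>\<bar> * \<bar>f y \<xi> - f z \<xi>\<bar> \<le> B * \<bar>f y \<xi> - f z \<xi>\<bar>"
      using \<phi>(2) by (intro mult_right_mono) (auto simp: space_\<mu>)
    then show "ennreal (norm (\<phi> \<xi> * f y \<xi> - \<phi> \<xi> * f z \<xi>)) \<le> ennreal B * ennreal \<bar>f y \<xi> - f z \<xi>\<bar>"
      using \<phi>(3) by (simp add: abs_mult right_diff_distrib[symmetric] ennreal_mult[symmetric] ennreal_leI)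
  qed
  also have "\<dots> = ennreal B * (\<integral>\<^sup>+\<xi>. ennreal \<bar>f y \<xi> - f z \<xi>\<bar> \<partial>\<mu> o')"
    by (rule nn_integral_cmult) (use y z in measurable)
  finally show ?thesis unfolding f_def .
qed

lemma nn_integral_abs_diff_egprod_point_le:
  "(\<integral>\<^sup>+\<xi>. ennreal \<bar>real_of_ereal (egprod o' (Inr \<xi>) (Inl w')) - real_of_ereal (egprod o' (Inr \<xi>) (Inl w))\<bar> \<partial>\<mu> o')
    \<le> ennreal (dist w w')"
proof -
  have "(\<integral>\<^sup>+\<xi>. ennreal \<bar>real_of_ereal (egprod o' (Inr \<xi>) (Inl w')) - real_of_ereal (egprod o' (Inr \<xi>) (Inl w))\<bar> \<partial>\<mu> o')
      \<le> (\<integral>\<^sup>+\<xi>. ennreal (dist w w') \<partial>\<mu> o')"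
    using egprod_ray_point_lipschitz[of _ o' w' w]
    by (intro nn_integral_mono ennreal_leI) (simp add: space_\<mu> dist_commute del: egprod.simps)
  then show ?thesis using prob_space.emeasure_space_1[OF prob_space_\<mu>] by simp
qed

lemma continuous_map_Iprime:
  assumes \<phi>: "\<phi> \<in> borel_measurable (\<mu> o')" "\<And>\<xi>. \<xi> \<in> rays o' \<Longrightarrow> \<bar>\<phi> \<xi>\<bar> \<le> B" "0 \<le> B"
  shows "continuous_map (Xbar_top o') euclideanreal (Iprime o' \<mu> \<phi>)"
proof (rule continuous_map_Xbar_top_I)
  fix z and \<epsilon> :: real assume z: "z \<in> Xbar o'" and \<epsilon>: "0 < \<epsilon>"
  define e where "e = \<epsilon> / (B + 1)"
  have e: "0 < e" "B * e < \<epsilon>" using \<epsilon> \<phi>(3) by (auto simp: e_def field_simps)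
  have small: "\<bar>Iprime o' \<mu> \<phi> y - Iprime o' \<mu> \<phi> z\<bar> < \<epsilon>" if y: "y \<in> Xbar o'" and
    int: "(\<integral>\<^sup>+\<xi>. ennreal \<bar>real_of_ereal (egprod o' (Inr \<xi>) y) - real_of_ereal (egprod o' (Inr \<xi>) z)\<bar> \<partial>\<mu> o')
      \<le> ennreal e" for y
  proof -
    have "ennreal \<bar>Iprime o' \<mu> \<phi> y - Iprime o' \<mu> \<phi> z\<bar> \<le> ennreal B * ennreal e"
      using abs_Iprime_diff_le[OF \<phi> y z] int by (meson mult_left_mono order_trans zero_le)
    then have "\<bar>Iprime o' \<mu> \<phi> y - Iprime o' \<mu> \<phi> z\<bar> \<le> B * e"
      using \<phi>(3) e by (simp add: ennreal_mult[symmetric] ennreal_le_iff)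
    then show ?thesis using e by linarith
  qed
  show "\<exists>V\<in>Xbar_basis o'. z \<in> V \<and> (\<forall>y\<in>V. \<bar>Iprime o' \<mu> \<phi> y - Iprime o' \<mu> \<phi> z\<bar> < \<epsilon>)"
    using z
  proof (cases rule: Xbar_cases)
    case (point w)
    have "\<bar>Iprime o' \<mu> \<phi> (Inl w') - Iprime o' \<mu> \<phi> z\<bar> < \<epsilon>" if "dist w w' < e" for w'
      using small[of "Inl w'"] nn_integral_abs_diff_egprod_point_le[of w' w] that
      by (simp add: point Xbar_def del: egprod.simps) (meson ennreal_leI less_imp_le order_trans)
    moreover have "Inl ` ball w e \<in> Xbar_basis o'" unfolding Xbar_basis_def by blast
    ultimately show ?thesis using point e by (intro bexI[of _ "Inl ` ball w e"]) auto
  next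
    case (ray \<eta>)
    obtain R where R: "\<forall>y\<in>Xbar o'. ereal R < egprod o' y (Inr \<eta>) \<longrightarrow>
       (\<integral>\<^sup>+\<xi>. ennreal \<bar>real_of_ereal (egprod o' (Inr \<xi>) y) - real_of_ereal (egprod o' (Inr \<xi>) (Inr \<eta>))\<bar> \<partial>\<mu> o')
         \<le> ennreal e"
      using nn_integral_abs_diff_egprod_small[OF ray(2) e(1)] by blast
    have "{y \<in> Xbar o'. egprod o' y (Inr \<eta>) > ereal R} \<in> Xbar_basis o'"
      unfolding Xbar_basis_def using ray by blast
    moreover have "z \<in> {y \<in> Xbar o'. egprod o' y (Inr \<eta>) > ereal R}"
      using z ray egprod_ray_self[OF ray(2)] by simp
    ultimately show ?thesis using R small ray by (intro bexI) auto
  qed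
qed

end

text \<open>Of the hypotheses on \<open>G\<close> only non-elementarity is used, to know that the boundary is
  nonempty (so that the supremum of \<open>\<bar>\<phi>\<bar>\<close> over it is not a junk value); the tail estimates hold
  for every Patterson--Sullivan density.\<close>

theorem lemma3p3:
  fixes o' :: "'a::metric_space" and G :: "('a \<Rightarrow> 'a) set"
    and \<mu> :: "'a \<Rightarrow> (real \<Rightarrow> 'a) measure"
  assumes "proper_metric TYPE('a)" and "geodesic_metric TYPE('a)" and "CAT_minus1 TYPE('a)"
    and "isometry_group G" and "discrete_group G" and "non_elementary o' G"
    and "convex_cocompact o' G"
    and "0 < crit_exp o' G"
    and "PS_density o' G \<mu>"
    and "o' \<in> hull_Q o' G"
  shows "\<exists>C. \<forall>\<phi>. continuous_map (bd_top o') euclideanreal \<phi> \<longrightarrow>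
           (\<forall>z\<in>Xbar o'. (\<integral>\<^sup>+\<xi>. ennreal \<bar>\<phi> \<xi>\<bar> * e2ennreal (egprod o' (Inr \<xi>) z) \<partial>\<mu> o') < \<infinity>)
         \<and> continuous_map (Xbar_top o') euclideanreal (Iprime o' \<mu> \<phi>)
         \<and> (\<forall>z\<in>Xbar o'. \<bar>Iprime o' \<mu> \<phi> z\<bar> \<le> C * (SUP \<xi>\<in>rays o'. \<bar>\<phi> \<xi>\<bar>))"
proof -
  interpret PS_setting o' G \<mu> using assms by unfold_locales
  have "rays o' \<noteq> {}"
    using assms(6) unfolding non_elementary_def limit_set_def by (auto intro: finite_subset)
  show ?thesis
  proof (intro exI allI impI)
    fix \<phi> assume \<phi>: "continuous_map (bd_top o') euclideanreal \<phi>"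
    define B where "B = (SUP \<xi>\<in>rays o'. \<bar>\<phi> \<xi>\<bar>)"
    have bounded: "\<bar>\<phi> \<xi>\<bar> \<le> B" if "\<xi> \<in> rays o'" for \<xi>
      unfolding B_def by (rule cSUP_upper[OF that continuous_map_bd_top_bounded[OF assms(1) \<phi>]])
    then have "0 \<le> B" using \<open>rays o' \<noteq> {}\<close> by (meson abs_ge_zero ex_in_conv order_trans)
    have "\<phi> \<in> borel_measurable (\<mu> o')" by (rule borel_measurable_continuous_bd_top[OF space_\<mu> sets_\<mu> \<phi>])
    note \<phi>' = this bounded \<open>0 \<le> B\<close>
    show "(\<forall>z\<in>Xbar o'. (\<integral>\<^sup>+\<xi>. ennreal \<bar>\<phi> \<xi>\<bar> * e2ennreal (egprod o' (Inr \<xi>) z) \<partial>\<mu> o') < \<infinity>)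
      \<and> continuous_map (Xbar_top o') euclideanreal (Iprime o' \<mu> \<phi>)
      \<and> (\<forall>z\<in>Xbar o'. \<bar>Iprime o' \<mu> \<phi> z\<bar> \<le> PS_tail 0 * (SUP \<xi>\<in>rays o'. \<bar>\<phi> \<xi>\<bar>))"
      using nn_integral_Iprime_le[OF \<phi>'] continuous_map_Iprime[OF \<phi>'] abs_Iprime_le[OF \<phi>']
      unfolding B_def by (auto intro: le_less_trans[OF _ ennreal_less_top])
  qed
qed

end
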